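(* Let $G=(V,E)$ be a finite graph with $m=|E|$ edges whose linear width is at most $\ell$, let $p\in(0,1)$ and $q\in\mathbb N$. Then the transition matrix $\tilde P_{\rm SW}$ of the Swendsen--Wang dynamics for the random-cluster model on $G$ with parameters $p$ and $q$ satisfies \[ \lambda(\tilde P_{\rm SW})\;\ge\;\frac{1}{2\,q^{\ell+1}}\,\frac{1}{m^2}. \]
   Context: The linear width of $G$ is the smallest $\ell$ such that there is an ordering $e_1,\dots,e_{|E|}$ of $E$ with the property that for every $i$ at most $\ell$ vertices are endvertices both of an edge in $\{e_1,\dots,e_i\}$ and of an edge in $\{e_{i+1},\dots,e_{|E|}\}$. For $A\subseteq E$, $c(A)$ is the number of connected components of $(V,A)$; for $\sigma\in\{1,\dots,q\}^V$, $E(\sigma)$ is the set of edges whose endvertices have the same color. Random-cluster measure $\mu(A)\propto(\tfrac{p}{1-p})^{|A|}q^{c(A)}$. Swendsen--Wang dynamics for the RC model: $\tilde P_{\rm SW}(A,B)=q^{-c(A)}\bigl(\tfrac{p}{1-p}\bigr)^{|B|}\sum_{\sigma}(1-p)^{|E(\sigma)|}\mathbf 1(A\cup B\subseteq E(\sigma))$, reversible w.r.t. $\mu$. Spectral gap: $\lambda(P)=1-\max\{|\xi|:\xi\text{ eigenvalue of }P,\ \xi\neq1\}$. *)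

theory Defs
  imports "HOL-Analysis.Analysis"
begin

text \<open>A finite (multi)graph is given by a vertex set V, an edge set E and a map
  ends assigning to each edge its set of endvertices (one or two vertices).\<close>

definition finite_graph :: "'v set \<Rightarrow> 'e set \<Rightarrow> ('e \<Rightarrow> 'v set) \<Rightarrow> bool" where
  "finite_graph V E ends \<longleftrightarrow> finite V \<and> finite E \<and>
     (\<forall>e\<in>E. ends e \<subseteq> V \<and> ends e \<noteq> {} \<and> card (ends e) \<le> 2)"

definition ordering_width :: "('e \<Rightarrow> 'v set) \<Rightarrow> 'e list \<Rightarrow> nat" where
  "ordering_width ends es =
     Max ((\<lambda>i. card ((\<Union>e\<in>set (take i es). ends e) \<inter> (\<Union>e\<in>set (drop i es). ends e)))
          ` {0..length es})"

definition linear_width :: "'e set \<Rightarrow> ('e \<Rightarrow> 'v set) \<Rightarrow> nat" where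
  "linear_width E ends =
     (LEAST l. \<exists>es. distinct es \<and> set es = E \<and> ordering_width ends es \<le> l)"

definition adj_rel :: "('e \<Rightarrow> 'v set) \<Rightarrow> 'e set \<Rightarrow> ('v \<times> 'v) set" where
  "adj_rel ends A = {(u, v). \<exists>e\<in>A. u \<in> ends e \<and> v \<in> ends e}"

definition conn_rel :: "'v set \<Rightarrow> ('e \<Rightarrow> 'v set) \<Rightarrow> 'e set \<Rightarrow> ('v \<times> 'v) set" where
  "conn_rel V ends A = Id_on V \<union> (adj_rel ends A)\<^sup>+"

definition num_comp :: "'v set \<Rightarrow> ('e \<Rightarrow> 'v set) \<Rightarrow> 'e set \<Rightarrow> nat" where
  "num_comp V ends A = card (V // conn_rel V ends A)"

definition mono_edges :: "'e set \<Rightarrow> ('e \<Rightarrow> 'v set) \<Rightarrow> ('v \<Rightarrow> nat) \<Rightarrow> 'e set" where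
  "mono_edges E ends \<sigma> = {e\<in>E. \<exists>c. \<forall>v\<in>ends e. \<sigma> v = c}"

definition SW_RC :: "'v set \<Rightarrow> 'e set \<Rightarrow> ('e \<Rightarrow> 'v set) \<Rightarrow> real \<Rightarrow> nat \<Rightarrow> 'e set \<Rightarrow> 'e set \<Rightarrow> real" where
  "SW_RC V E ends p q A B =
     (1 / real q ^ num_comp V ends A) * (p / (1 - p)) ^ card B *
     (\<Sum>\<sigma>\<in>(V \<rightarrow>\<^sub>E {1..q}).
        (1 - p) ^ card (mono_edges E ends \<sigma>) *
        (if A \<union> B \<subseteq> mono_edges E ends \<sigma> then 1 else 0))"

definition is_eigenvalue :: "'s set \<Rightarrow> ('s \<Rightarrow> 's \<Rightarrow> real) \<Rightarrow> complex \<Rightarrow> bool" where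
  "is_eigenvalue S P \<xi> \<longleftrightarrow>
     (\<exists>f :: 's \<Rightarrow> complex. (\<exists>x\<in>S. f x \<noteq> 0) \<and>
        (\<forall>x\<in>S. (\<Sum>y\<in>S. complex_of_real (P x y) * f y) = \<xi> * f x))"

text \<open>Spectral gap 1 - max{|xi| : xi eigenvalue, xi \<noteq> 1} (convention: max of the empty set is 0).\<close>

definition spectral_gap :: "'s set \<Rightarrow> ('s \<Rightarrow> 's \<Rightarrow> real) \<Rightarrow> real" where
  "spectral_gap S P = 1 - Max (insert 0 {cmod \<xi> | \<xi>. is_eigenvalue S P \<xi> \<and> \<xi> \<noteq> 1})"

end

theory Submission
  imports Defs "Jordan_Normal_Form.Spectral_Radius"
begin

text \<open>The Swendsen--Wang chain \<open>P\<close> is reversible with respect to the random-cluster measure \<open>\<mu>\<close>, and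
  summing out the colouring writes \<open>\<mu> P\<close> as a mixture, over colourings \<open>\<sigma>\<close>, of independent
  \<open>p\<close>-percolation on the monochromatic edges. Hence \<open>P\<close> is positive semidefinite, and its Dirichlet
  form dominates \<open>1/m\<close> times that of single-edge heat-bath updates (a variance bound for each
  product measure). The latter is compared with the variance by canonical paths: given an edge
  ordering of linear width \<open>\<le> l\<close>, the \<open>i\<close>-th state on the path from \<open>A\<close> to \<open>B\<close> takes the first
  \<open>i\<close> edges from \<open>B\<close> and the rest from \<open>A\<close>. Exchanging the parts of two configurations on a
  prefix of the ordering changes the number of compatible colourings by a factor at most \<open>q\<^sup>l\<close>,
  since colourings only have to be matched on the \<open>\<le> l\<close> boundary vertices, and a single-edge flip
  costs another factor \<open>q\<close>. This gives the Poincare inequality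
  \<open>Var(u) \<le> m\<^sup>2 q\<^sup>l\<^sup>+\<^sup>1 (Var(u) - \<langle>u, P u\<rangle>)\<close> and so every eigenvalue
  \<open>\<xi> \<noteq> 1\<close> satisfies \<open>0 \<le> \<xi> \<le> 1 - 1/(m\<^sup>2 q\<^sup>l\<^sup>+\<^sup>1)\<close>.\<close>

section \<open>Finite sums and counting\<close>

lemma sum_Pow_insert:
  assumes "finite T" "e \<notin> T"
  shows "(\<Sum>A\<in>Pow (insert e T). f A) = (\<Sum>A\<in>Pow T. f A + f (insert e A))"
proof -
  have disj: "Pow T \<inter> insert e ` Pow T = {}" using assms by auto
  have inj: "inj_on (insert e) (Pow T)"
    by (rule inj_onI) (use assms in \<open>auto simp: insert_ident\<close>)
  have "(\<Sum>A\<in>Pow (insert e T). f A) = (\<Sum>A\<in>Pow T. f A) + (\<Sum>A\<in>insert e ` Pow T. f A)"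
    unfolding Pow_insert by (rule sum.union_disjoint) (use assms disj in auto)
  also have "(\<Sum>A\<in>insert e ` Pow T. f A) = (\<Sum>A\<in>Pow T. f (insert e A))"
    by (rule sum.reindex[OF inj, unfolded comp_def])
  finally show ?thesis by (simp add: sum.distrib)
qed

lemma sum_Pow_remove:
  assumes "finite T" "e \<in> T"
  shows "(\<Sum>A\<in>Pow T. f A) = (\<Sum>A\<in>Pow (T - {e}). f A + f (insert e A))"
  using sum_Pow_insert[of "T - {e}" e f] assms by (simp add: insert_absorb)

lemma sum_Pow_power_card:
  fixes r :: "'a :: comm_semiring_1"
  assumes "finite T"
  shows "(\<Sum>A\<in>Pow T. r ^ card A) = (1 + r) ^ card T"
  using prod_add[OF assms, of "\<lambda>_. r" "\<lambda>_. 1"] by (simp add: add.commute)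

lemma sum_Pow_if_subset:
  assumes "finite E" "T \<subseteq> E"
  shows "(\<Sum>A\<in>Pow E. if A \<subseteq> T then f A else 0) = (\<Sum>A\<in>Pow T. f A)"
proof -
  have "{A \<in> Pow E. A \<subseteq> T} = Pow T" using assms by auto
  then show ?thesis using sum.inter_filter[of "Pow E" f "\<lambda>A. A \<subseteq> T"] assms by simp
qed

lemma card_le_mult_if_fibres_le:
  assumes "finite Y" "f ` X \<subseteq> Y" "\<And>y. y \<in> Y \<Longrightarrow> card {x\<in>X. f x = y} \<le> k"
  shows "card X \<le> card Y * k"
proof -
  have "X = (\<Union>y\<in>Y. {x\<in>X. f x = y})" using assms(2) by auto
  then have "card X \<le> (\<Sum>y\<in>Y. card {x\<in>X. f x = y})" by (metis card_UN_le assms(1))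
  also have "\<dots> \<le> card Y * k" using sum_bounded_above[of Y _ k] assms(3) by auto
  finally show ?thesis .
qed

lemma card_le_2_imp_doubleton:
  assumes "finite X" "X \<noteq> {}" "card X \<le> 2"
  obtains u v where "X = {u, v}"
proof -
  obtain u where u: "u \<in> X" using assms(2) by auto
  show ?thesis
  proof (cases "X = {u}")
    case True then show ?thesis using that[of u u] by simp
  next
    case False
    then obtain v where v: "v \<in> X" "v \<noteq> u" using u by auto
    have "{u, v} \<subseteq> X" "card {u, v} = 2" using u v by auto
    then have "{u, v} = X" using card_subset_eq[OF assms(1)] assms(3) card_mono[OF assms(1)]
      by (metis antisym)
    then show ?thesis using that by blast
  qed
qed

lemma telescope_sq_le:
  fixes f :: "nat \<Rightarrow> real"
  shows "(f m - f 0)\<^sup>2 \<le> real m * (\<Sum>i<m. (f (Suc i) - f i)\<^sup>2)"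
proof -
  have "(\<Sum>i<m. 1 * (f (Suc i) - f i))\<^sup>2 \<le> (\<Sum>i<m. 1\<^sup>2) * (\<Sum>i<m. (f (Suc i) - f i)\<^sup>2)"
    by (rule Cauchy_Schwarz_ineq_sum)
  then have "(\<Sum>i<m. f (Suc i) - f i)\<^sup>2 \<le> real m * (\<Sum>i<m. (f (Suc i) - f i)\<^sup>2)" by simp
  then show ?thesis by (simp only: sum_lessThan_telescope)
qed

section \<open>Splicing edge sets and linear width\<close>

definition splice :: "'e set \<Rightarrow> 'e set \<Rightarrow> 'e set \<Rightarrow> 'e set" where
  "splice X A B = (B \<inter> X) \<union> (A - X)"

lemma splice_insert:
  "e \<notin> X \<Longrightarrow> splice (insert e X) A B = splice {e} (splice X A B) (splice X B A)"
  unfolding splice_def by auto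

lemma splice_splice: "splice X (splice X A B) (splice X B A) = A"
  unfolding splice_def by auto

lemma ordering_width_ge:
  assumes "i \<le> length es"
  shows "card ((\<Union>e\<in>set (take i es). ends e) \<inter> (\<Union>e\<in>set (drop i es). ends e)) \<le> ordering_width ends es"
  unfolding ordering_width_def by (rule Max_ge) (use assms in auto)

lemma linear_width_ordering:
  assumes "finite E"
  obtains es where "distinct es" "set es = E" "ordering_width ends es \<le> linear_width E ends"
proof -
  obtain es0 where "distinct es0" "set es0 = E" using finite_distinct_list[OF assms] by blast
  then have "\<exists>k es. distinct es \<and> set es = E \<and> ordering_width ends es \<le> k" by blast
  then have "\<exists>es. distinct es \<and> set es = E \<and> ordering_width ends es \<le> linear_width E ends"
    unfolding linear_width_def by (rule LeastI_ex)
  then show ?thesis using that by blast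
qed

section \<open>Colourings compatible with an edge set\<close>

lemma equiv_conn_rel:
  assumes "\<forall>e\<in>A. ends e \<subseteq> V"
  shows "equiv V (conn_rel V ends A)"
proof -
  let ?r = "adj_rel ends A"
  have r_V: "?r\<^sup>+ \<subseteq> V \<times> V"
    using assms trancl_subset_Sigma[of ?r V] unfolding adj_rel_def by auto
  have "sym (?r\<^sup>+)" by (rule sym_trancl) (auto simp: adj_rel_def sym_def)
  then have "sym (Id_on V \<union> ?r\<^sup>+)" by (auto simp: sym_def)
  moreover have "trans (Id_on V \<union> ?r\<^sup>+)" unfolding trans_def by (auto intro: trancl_trans)
  ultimately show ?thesis
    using r_V unfolding equiv_def conn_rel_def refl_on_def by auto
qed

lemma subset_mono_edges_iff_conn_rel:
  assumes "A \<subseteq> E"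
  shows "A \<subseteq> mono_edges E ends \<sigma> \<longleftrightarrow> (\<forall>(u, v) \<in> conn_rel V ends A. \<sigma> u = \<sigma> v)"
proof
  assume mono: "A \<subseteq> mono_edges E ends \<sigma>"
  have adj: "\<sigma> a = \<sigma> b" if "(a, b) \<in> adj_rel ends A" for a b
    using that mono unfolding adj_rel_def mono_edges_def by force
  have "\<sigma> a = \<sigma> b" if "(a, b) \<in> (adj_rel ends A)\<^sup>+" for a b
    using that by (induction rule: trancl_induct) (auto dest: adj)
  then show "\<forall>(u, v) \<in> conn_rel V ends A. \<sigma> u = \<sigma> v" unfolding conn_rel_def by auto
next
  assume const: "\<forall>(u, v) \<in> conn_rel V ends A. \<sigma> u = \<sigma> v"
  have "\<exists>c. \<forall>v\<in>ends e. \<sigma> v = c" if e: "e \<in> A" for e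
  proof (cases "ends e = {}")
    case False
    then obtain u where u: "u \<in> ends e" by auto
    have "(v, u) \<in> conn_rel V ends A" if "v \<in> ends e" for v
      using that u e unfolding conn_rel_def adj_rel_def by blast
    then show ?thesis using const by blast
  qed simp
  then show "A \<subseteq> mono_edges E ends \<sigma>" using assms unfolding mono_edges_def by blast
qed

lemma card_PiE_respecting:
  assumes eq: "equiv V R" and V: "finite V"
  shows "card {\<sigma> \<in> V \<rightarrow>\<^sub>E C. \<forall>(u, v) \<in> R. \<sigma> u = \<sigma> v} = card C ^ card (V // R)"
proof -
  let ?Resp = "{\<sigma> \<in> V \<rightarrow>\<^sub>E C. \<forall>(u, v) \<in> R. \<sigma> u = \<sigma> v}"
  define lift where "lift = (\<lambda>g :: 'a set \<Rightarrow> 'b. \<lambda>v\<in>V. g (R``{v}))"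
  have "bij_betw lift (V // R \<rightarrow>\<^sub>E C) ?Resp"
  proof (rule bij_betwI')
    fix g h assume g: "g \<in> V // R \<rightarrow>\<^sub>E C" and h: "h \<in> V // R \<rightarrow>\<^sub>E C"
    show "lift g = lift h \<longleftrightarrow> g = h"
    proof
      assume gh: "lift g = lift h"
      show "g = h"
      proof (rule extensionalityI[where A = "V // R"])
        fix X assume "X \<in> V // R"
        then obtain v where "v \<in> V" "X = R``{v}" by (auto elim: quotientE)
        then show "g X = h X" using fun_cong[OF gh, of v] unfolding lift_def by auto
      qed (use g h in \<open>auto simp: PiE_iff\<close>)
    qed simp
  next
    fix g assume g: "g \<in> V // R \<rightarrow>\<^sub>E C"
    have "lift g u = lift g v" if "(u, v) \<in> R" for u v
      using that equiv_class_eq[OF eq] equiv_type[OF eq] unfolding lift_def by auto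
    moreover have "lift g \<in> V \<rightarrow>\<^sub>E C" using g unfolding lift_def by (auto intro: quotientI)
    ultimately show "lift g \<in> ?Resp" by auto
  next
    fix \<sigma> assume \<sigma>: "\<sigma> \<in> ?Resp"
    define g where "g = (\<lambda>X\<in>V // R. \<sigma> (SOME v. v \<in> X))"
    have rep: "(v, SOME u. u \<in> R``{v}) \<in> R" if "v \<in> V" for v
      using someI[of "\<lambda>u. u \<in> R``{v}" v] equiv_class_self[OF eq that] by blast
    have "g \<in> V // R \<rightarrow>\<^sub>E C"
    proof
      fix X assume X: "X \<in> V // R"
      then obtain v where v: "v \<in> V" "X = R``{v}" by (auto elim: quotientE)
      then have "(SOME u. u \<in> X) \<in> V" using rep[OF v(1)] equiv_type[OF eq] by auto
      then show "g X \<in> C" using \<sigma> X unfolding g_def by auto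
    qed (simp add: g_def)
    moreover have "lift g = \<sigma>"
    proof
      fix v show "lift g v = \<sigma> v"
      proof (cases "v \<in> V")
        case True
        then have "\<sigma> (SOME u. u \<in> R``{v}) = \<sigma> v" using \<sigma> rep[OF True] by fastforce
        then show ?thesis using True unfolding lift_def g_def by (auto intro: quotientI)
      qed (use \<sigma> in \<open>auto simp: lift_def\<close>)
    qed
    ultimately show "\<exists>g \<in> V // R \<rightarrow>\<^sub>E C. \<sigma> = lift g" by auto
  qed
  then have "card ?Resp = card (V // R \<rightarrow>\<^sub>E C)" by (simp add: bij_betw_same_card)
  also have "\<dots> = card C ^ card (V // R)"
    using finite_quotient[OF V equiv_type[OF eq]] by (simp add: card_PiE)
  finally show ?thesis .
qed

definition mono_colourings :: "'v set \<Rightarrow> 'e set \<Rightarrow> ('e \<Rightarrow> 'v set) \<Rightarrow> nat \<Rightarrow> 'e set \<Rightarrow> ('v \<Rightarrow> nat) set" where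
  "mono_colourings V E ends q F = {\<sigma> \<in> V \<rightarrow>\<^sub>E {1..q}. F \<subseteq> mono_edges E ends \<sigma>}"

lemma finite_mono_colourings: "finite V \<Longrightarrow> finite (mono_colourings V E ends q F)"
  unfolding mono_colourings_def by (rule finite_subset[of _ "V \<rightarrow>\<^sub>E {1..q}"]) (auto intro!: finite_PiE)

lemma card_mono_colourings:
  assumes "finite V" "A \<subseteq> E" "\<forall>e\<in>E. ends e \<subseteq> V"
  shows "card (mono_colourings V E ends q A) = q ^ num_comp V ends A"
proof -
  have "equiv V (conn_rel V ends A)" by (rule equiv_conn_rel) (use assms in blast)
  then show ?thesis
    using card_PiE_respecting[of V "conn_rel V ends A" "{1..q}"] assms
    unfolding mono_colourings_def num_comp_def subset_mono_edges_iff_conn_rel[OF assms(2), where V = V]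
    by simp
qed

text \<open>Colours are treated as residues modulo \<open>q\<close> with representatives \<open>{1..q}\<close>. Subtracting a fixed
  colouring is injective and keeps monochromatic edges monochromatic; this drives the colour counting.\<close>

definition colour_diff :: "nat \<Rightarrow> nat \<Rightarrow> nat \<Rightarrow> nat" where
  "colour_diff q a b = nat ((int a - int b) mod int q) + 1"

lemma colour_diff_range:
  assumes "1 \<le> q" shows "colour_diff q a b \<in> {1..q}"
proof -
  have "0 \<le> (int a - int b) mod int q" "(int a - int b) mod int q < int q" using assms by simp_all
  then show ?thesis unfolding colour_diff_def by auto
qed

lemma colour_diff_eq_iff:
  assumes "1 \<le> q"
  shows "colour_diff q a b = colour_diff q c d \<longleftrightarrow> (int a - int b) mod int q = (int c - int d) mod int q"
proof -
  have "0 \<le> (int a - int b) mod int q" "0 \<le> (int c - int d) mod int q" using assms by simp_all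
  then show ?thesis unfolding colour_diff_def by (simp add: eq_nat_nat_iff)
qed

lemma colour_diff_exchange:
  assumes "1 \<le> q" "colour_diff q a b = colour_diff q a' b'"
  shows "colour_diff q a a' = colour_diff q b b'"
proof -
  have "(int a - int b) mod int q = (int a' - int b') mod int q"
    using assms(2) colour_diff_eq_iff[OF assms(1)] by blast
  then have "int q dvd (int a - int b) - (int a' - int b')" by (simp add: mod_eq_dvd_iff)
  moreover have "(int a - int b) - (int a' - int b') = (int a - int a') - (int b - int b')" by simp
  ultimately have "int q dvd (int a - int a') - (int b - int b')" by simp
  then show ?thesis using colour_diff_eq_iff[OF assms(1)] by (simp add: mod_eq_dvd_iff)
qed

lemma colour_diff_cancel_right:
  assumes "1 \<le> q" "a \<in> {1..q}" "a' \<in> {1..q}" "colour_diff q a b = colour_diff q a' b"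
  shows "a = a'"
proof -
  have "(int a - int b) mod int q = (int a' - int b) mod int q"
    using assms(4) colour_diff_eq_iff[OF assms(1)] by blast
  then have "int q dvd (int a - int b) - (int a' - int b)" by (simp add: mod_eq_dvd_iff)
  then have "int q dvd (int a - 1) - (int a' - 1)" by (simp add: algebra_simps)
  then have "(int a - 1) mod int q = (int a' - 1) mod int q" by (simp add: mod_eq_dvd_iff)
  moreover have "(int a - 1) mod int q = int a - 1" using assms(2) by (intro mod_pos_pos_trivial) auto
  moreover have "(int a' - 1) mod int q = int a' - 1" using assms(3) by (intro mod_pos_pos_trivial) auto
  ultimately show ?thesis by simp
qed

definition colouring_diff :: "'v set \<Rightarrow> nat \<Rightarrow> ('v \<Rightarrow> nat) \<Rightarrow> ('v \<Rightarrow> nat) \<Rightarrow> 'v \<Rightarrow> nat" where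
  "colouring_diff V q \<sigma> \<tau> = (\<lambda>v\<in>V. colour_diff q (\<sigma> v) (\<tau> v))"

lemma colouring_diff_PiE: "1 \<le> q \<Longrightarrow> colouring_diff V q \<sigma> \<tau> \<in> V \<rightarrow>\<^sub>E {1..q}"
  unfolding colouring_diff_def using colour_diff_range by (simp add: restrict_PiE_iff)

lemma mono_edges_colouring_diff:
  assumes "\<forall>e\<in>E. ends e \<subseteq> V" "F \<subseteq> mono_edges E ends \<sigma>" "F \<subseteq> mono_edges E ends \<tau>"
  shows "F \<subseteq> mono_edges E ends (colouring_diff V q \<sigma> \<tau>)"
proof
  fix e assume e: "e \<in> F"
  then obtain c d where cd: "e \<in> E" "\<forall>v\<in>ends e. \<sigma> v = c" "\<forall>v\<in>ends e. \<tau> v = d"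
    using assms(2,3) unfolding mono_edges_def by blast
  then have "\<forall>v\<in>ends e. colouring_diff V q \<sigma> \<tau> v = colour_diff q c d"
    using assms(1) unfolding colouring_diff_def by auto
  then show "e \<in> mono_edges E ends (colouring_diff V q \<sigma> \<tau>)"
    using cd(1) unfolding mono_edges_def by blast
qed

lemma inj_on_colouring_diff:
  assumes q: "1 \<le> q"
  shows "inj_on (\<lambda>\<sigma>. colouring_diff V q \<sigma> \<tau>) (V \<rightarrow>\<^sub>E {1..q})"
proof (rule inj_onI)
  fix \<sigma> \<sigma>' assume \<sigma>: "\<sigma> \<in> V \<rightarrow>\<^sub>E {1..q}" and \<sigma>': "\<sigma>' \<in> V \<rightarrow>\<^sub>E {1..q}"
    and eq: "colouring_diff V q \<sigma> \<tau> = colouring_diff V q \<sigma>' \<tau>"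
  show "\<sigma> = \<sigma>'"
  proof
    fix v show "\<sigma> v = \<sigma>' v"
    proof (cases "v \<in> V")
      case True
      then have "colour_diff q (\<sigma> v) (\<tau> v) = colour_diff q (\<sigma>' v) (\<tau> v)"
        using fun_cong[OF eq, of v] by (simp add: colouring_diff_def)
      then show ?thesis
        by (rule colour_diff_cancel_right[OF q PiE_mem[OF \<sigma> True] PiE_mem[OF \<sigma>' True]])
    qed (simp add: PiE_arb[OF \<sigma>] PiE_arb[OF \<sigma>'])
  qed
qed

lemma colouring_diff_mono_colourings:
  assumes "1 \<le> q" "\<forall>e\<in>E. ends e \<subseteq> V"
    and "\<sigma> \<in> mono_colourings V E ends q F" "\<tau> \<in> mono_colourings V E ends q F"
  shows "colouring_diff V q \<sigma> \<tau> \<in> mono_colourings V E ends q F"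
  using mono_edges_colouring_diff[OF assms(2), of F \<sigma> \<tau>] colouring_diff_PiE[OF assms(1), of V \<sigma> \<tau>] assms(3,4)
  unfolding mono_colourings_def by simp

lemma mono_edges_if_agree_on_ends:
  "e \<in> mono_edges E ends \<sigma> \<Longrightarrow> \<forall>v\<in>ends e. \<sigma>' v = \<sigma> v \<Longrightarrow> e \<in> mono_edges E ends \<sigma>'"
  unfolding mono_edges_def by auto

lemma card_mono_colourings_le_insert:
  assumes V: "finite V" and q: "1 \<le> q" and e: "e \<in> E"
    and ends: "\<forall>e\<in>E. ends e \<subseteq> V \<and> ends e \<noteq> {} \<and> card (ends e) \<le> 2"
  shows "card (mono_colourings V E ends q F) \<le> q * card (mono_colourings V E ends q (insert e F))"
proof -
  have "finite (ends e)" using ends e V finite_subset by blast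
  then obtain u v where uv: "ends e = {u, v}" using card_le_2_imp_doubleton ends e by meson
  let ?C = "mono_colourings V E ends q F"
  let ?C' = "mono_colourings V E ends q (insert e F)"
  let ?f = "\<lambda>\<sigma>. colour_diff q (\<sigma> u) (\<sigma> v)"
  have "card ?C \<le> card {1..q} * card ?C'"
  proof (rule card_le_mult_if_fibres_le)
    show "?f ` ?C \<subseteq> {1..q}" using colour_diff_range[OF q] by auto
  next
    fix y
    show "card {\<sigma> \<in> ?C. ?f \<sigma> = y} \<le> card ?C'"
    proof (cases "{\<sigma> \<in> ?C. ?f \<sigma> = y} = {}")
      case False
      then obtain \<sigma>0 where \<sigma>0: "\<sigma>0 \<in> ?C" "?f \<sigma>0 = y" by auto
      let ?g = "\<lambda>\<sigma>. colouring_diff V q \<sigma> \<sigma>0"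
      have "{\<sigma> \<in> ?C. ?f \<sigma> = y} \<subseteq> V \<rightarrow>\<^sub>E {1..q}" unfolding mono_colourings_def by blast
      then have "inj_on ?g {\<sigma> \<in> ?C. ?f \<sigma> = y}" by (rule inj_on_subset[OF inj_on_colouring_diff[OF q]])
      moreover have "?g \<sigma> \<in> ?C'" if \<sigma>: "\<sigma> \<in> ?C" "?f \<sigma> = y" for \<sigma>
      proof -
        have "colour_diff q (\<sigma> u) (\<sigma>0 u) = colour_diff q (\<sigma> v) (\<sigma>0 v)"
          using colour_diff_exchange[OF q] \<sigma>(2) \<sigma>0(2) by metis
        then have "e \<in> mono_edges E ends (?g \<sigma>)"
          using e ends uv unfolding mono_edges_def colouring_diff_def by auto
        moreover have "?g \<sigma> \<in> ?C"
          using ends by (intro colouring_diff_mono_colourings[OF q _ \<sigma>(1) \<sigma>0(1)]) blast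
        ultimately show ?thesis unfolding mono_colourings_def by simp
      qed
      ultimately show ?thesis
        by (intro card_inj_on_le finite_mono_colourings[OF V]) auto
    qed (simp only: card.empty zero_le)
  qed simp
  then show ?thesis by simp
qed

lemma card_mono_colourings_pairs_le_agreeing:
  fixes V :: "'v set" and E :: "'e set" and ends :: "'e \<Rightarrow> 'v set" and A B :: "'e set"
  assumes V: "finite V" and q: "1 \<le> q" and ends: "\<forall>e\<in>E. ends e \<subseteq> V" and D: "D \<subseteq> V"
  defines "CA \<equiv> mono_colourings V E ends q A" and "CB \<equiv> mono_colourings V E ends q B"
  shows "card (CA \<times> CB) \<le> q ^ card D * card {(\<sigma>, \<tau>) \<in> CA \<times> CB. \<forall>v\<in>D. \<sigma> v = \<tau> v}"
proof -
  let ?K = "{(\<sigma>, \<tau>) \<in> CA \<times> CB. \<forall>v\<in>D. \<sigma> v = \<tau> v}"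
  have fin: "finite CA" "finite CB" "finite D"
    using finite_mono_colourings[OF V] finite_subset[OF D V] unfolding CA_def CB_def by auto
  define f where "f = (\<lambda>(\<sigma>, \<tau>). \<lambda>v\<in>D. colour_diff q (\<sigma> v) (\<tau> v))"
  have "card (CA \<times> CB) \<le> card (D \<rightarrow>\<^sub>E {1..q}) * card ?K"
  proof (rule card_le_mult_if_fibres_le)
    show "f ` (CA \<times> CB) \<subseteq> D \<rightarrow>\<^sub>E {1..q}" using colour_diff_range[OF q] by (auto simp: f_def)
  next
    fix y
    show "card {st \<in> CA \<times> CB. f st = y} \<le> card ?K"
    proof (cases "{st \<in> CA \<times> CB. f st = y} = {}")
      case False
      then obtain \<sigma>0 \<tau>0 where st0: "(\<sigma>0, \<tau>0) \<in> CA \<times> CB" "f (\<sigma>0, \<tau>0) = y" by auto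
      define g where "g = map_prod (\<lambda>\<sigma>. colouring_diff V q \<sigma> \<sigma>0) (\<lambda>\<tau>. colouring_diff V q \<tau> \<tau>0)"
      have "CA \<subseteq> V \<rightarrow>\<^sub>E {1..q}" "CB \<subseteq> V \<rightarrow>\<^sub>E {1..q}"
        unfolding CA_def CB_def mono_colourings_def by auto
      then have inj: "inj_on g (CA \<times> CB)"
        unfolding g_def by (intro map_prod_inj_on inj_on_subset[OF inj_on_colouring_diff[OF q]])
      have into: "g st \<in> ?K" if st: "st \<in> CA \<times> CB" "f st = y" for st
      proof -
        obtain \<sigma> \<tau> where st_eq: "st = (\<sigma>, \<tau>)" by (cases st)
        have agree: "colouring_diff V q \<sigma> \<sigma>0 v = colouring_diff V q \<tau> \<tau>0 v" if v: "v \<in> D" for v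
        proof -
          have "f (\<sigma>, \<tau>) v = f (\<sigma>0, \<tau>0) v" using st(2) st0(2) st_eq by simp
          then have "colour_diff q (\<sigma> v) (\<tau> v) = colour_diff q (\<sigma>0 v) (\<tau>0 v)" using v by (simp add: f_def)
          then have "colour_diff q (\<sigma> v) (\<sigma>0 v) = colour_diff q (\<tau> v) (\<tau>0 v)"
            by (rule colour_diff_exchange[OF q])
          then show ?thesis using v D by (auto simp: colouring_diff_def)
        qed
        have \<sigma>\<tau>: "\<sigma> \<in> CA" "\<tau> \<in> CB" "\<sigma>0 \<in> CA" "\<tau>0 \<in> CB" using st(1) st0(1) by (simp_all add: st_eq)
        have mem: "colouring_diff V q \<sigma> \<sigma>0 \<in> CA" "colouring_diff V q \<tau> \<tau>0 \<in> CB"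
          using colouring_diff_mono_colourings[OF q ends \<sigma>\<tau>(1,3)[unfolded CA_def]]
            colouring_diff_mono_colourings[OF q ends \<sigma>\<tau>(2,4)[unfolded CB_def]]
          unfolding CA_def CB_def .
        show ?thesis using agree mem by (simp add: st_eq g_def)
      qed
      have "inj_on g {st \<in> CA \<times> CB. f st = y}" using inj by (rule inj_on_subset) auto
      moreover have "g ` {st \<in> CA \<times> CB. f st = y} \<subseteq> ?K" by (intro image_subsetI into) auto
      moreover have "finite ?K" by (rule finite_subset[of _ "CA \<times> CB"]) (use fin in auto)
      ultimately show ?thesis by (rule card_inj_on_le)
    qed (simp only: card.empty zero_le)
  qed (use fin in \<open>auto intro: finite_PiE\<close>)
  then show ?thesis using fin by (simp add: card_PiE)
qed

text \<open>Exchanging two colourings on the vertices of the edges in \<open>X\<close> exchanges which of them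
  colours \<open>A \<inter> X\<close> and \<open>B \<inter> X\<close> monochromatically; this is consistent as soon as both colourings
  agree on the boundary between \<open>X\<close> and \<open>E - X\<close>.\<close>

lemma card_agreeing_pairs_le_swapped:
  fixes V :: "'v set" and E :: "'e set" and ends :: "'e \<Rightarrow> 'v set" and X :: "'e set"
  assumes V: "finite V" and AB: "A \<subseteq> E" "B \<subseteq> E"
  defines "W \<equiv> \<Union>e\<in>X. ends e"
  defines "D \<equiv> W \<inter> (\<Union>e\<in>E - X. ends e)"
  shows "card {(\<sigma>, \<tau>) \<in> mono_colourings V E ends q A \<times> mono_colourings V E ends q B. \<forall>v\<in>D. \<sigma> v = \<tau> v}
    \<le> card (mono_colourings V E ends q (splice X A B) \<times> mono_colourings V E ends q (splice X B A))"
  unfolding splice_def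
proof (rule card_inj_on_le)
  define swap where "swap = (\<lambda>(\<sigma> :: 'v \<Rightarrow> nat, \<tau>). ((\<lambda>v. if v \<in> W then \<tau> v else \<sigma> v), (\<lambda>v. if v \<in> W then \<sigma> v else \<tau> v)))"
  show "inj_on swap {(\<sigma>, \<tau>) \<in> mono_colourings V E ends q A \<times> mono_colourings V E ends q B. \<forall>v\<in>D. \<sigma> v = \<tau> v}"
    by (rule inj_on_inverseI[where g = swap]) (auto simp: swap_def fun_eq_iff)
  have merge_PiE: "(\<lambda>v. if v \<in> W then \<tau> v else \<sigma> v) \<in> V \<rightarrow>\<^sub>E {1..q}"
    if "\<sigma> \<in> V \<rightarrow>\<^sub>E {1..q}" "\<tau> \<in> V \<rightarrow>\<^sub>E {1..q}" for \<sigma> \<tau> :: "'v \<Rightarrow> nat"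
    using that by (auto simp: PiE_iff extensional_def)
  have merge_mono: "(S \<inter> X) \<union> (T - X) \<subseteq> mono_edges E ends (\<lambda>v. if v \<in> W then \<tau> v else \<sigma> v)"
    if S_mono: "S \<subseteq> mono_edges E ends \<tau>" and T_mono: "T \<subseteq> mono_edges E ends \<sigma>"
      and agree: "\<forall>v\<in>D. \<sigma> v = \<tau> v" for S T \<sigma> \<tau>
  proof
    fix e assume "e \<in> (S \<inter> X) \<union> (T - X)"
    then consider "e \<in> S" "ends e \<subseteq> W" | "e \<in> T" "e \<in> E - X"
      using T_mono unfolding W_def mono_edges_def by blast
    then show "e \<in> mono_edges E ends (\<lambda>v. if v \<in> W then \<tau> v else \<sigma> v)"
    proof cases
      case 1
      have "e \<in> mono_edges E ends \<tau>" using 1 S_mono by blast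
      moreover have "\<forall>v\<in>ends e. (if v \<in> W then \<tau> v else \<sigma> v) = \<tau> v" using 1 by auto
      ultimately show ?thesis by (rule mono_edges_if_agree_on_ends)
    next
      case 2
      have "e \<in> mono_edges E ends \<sigma>" using 2 T_mono by blast
      moreover have "\<forall>v\<in>ends e. (if v \<in> W then \<tau> v else \<sigma> v) = \<sigma> v"
        using 2 agree UN_upper[of e "E - X" ends] unfolding D_def by (metis IntI subsetD)
      ultimately show ?thesis by (rule mono_edges_if_agree_on_ends)
    qed
  qed
  show "swap ` {(\<sigma>, \<tau>) \<in> mono_colourings V E ends q A \<times> mono_colourings V E ends q B. \<forall>v\<in>D. \<sigma> v = \<tau> v}
    \<subseteq> mono_colourings V E ends q ((B \<inter> X) \<union> (A - X)) \<times> mono_colourings V E ends q ((A \<inter> X) \<union> (B - X))"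
  proof (rule image_subsetI)
    fix st
    assume "st \<in> {(\<sigma>, \<tau>) \<in> mono_colourings V E ends q A \<times> mono_colourings V E ends q B. \<forall>v\<in>D. \<sigma> v = \<tau> v}"
    then obtain \<sigma> \<tau> where st: "st = (\<sigma>, \<tau>)" and agree: "\<forall>v\<in>D. \<sigma> v = \<tau> v"
      and \<sigma>: "\<sigma> \<in> V \<rightarrow>\<^sub>E {1..q}" "A \<subseteq> mono_edges E ends \<sigma>"
      and \<tau>: "\<tau> \<in> V \<rightarrow>\<^sub>E {1..q}" "B \<subseteq> mono_edges E ends \<tau>"
      unfolding mono_colourings_def by (cases st) auto
    have "\<forall>v\<in>D. \<tau> v = \<sigma> v" using agree by simp
    then show "swap st \<in> mono_colourings V E ends q ((B \<inter> X) \<union> (A - X))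
        \<times> mono_colourings V E ends q ((A \<inter> X) \<union> (B - X))"
      using merge_PiE[OF \<sigma>(1) \<tau>(1)] merge_PiE[OF \<tau>(1) \<sigma>(1)]
        merge_mono[OF \<tau>(2) \<sigma>(2) agree] merge_mono[OF \<sigma>(2) \<tau>(2)]
      unfolding st swap_def mono_colourings_def by simp
  qed
qed (simp add: finite_mono_colourings[OF V])

lemma card_mono_colourings_mult_le:
  assumes V: "finite V" and q: "1 \<le> q" and ends: "\<forall>e\<in>E. ends e \<subseteq> V" and AB: "A \<subseteq> E" "B \<subseteq> E"
  shows "card (mono_colourings V E ends q A) * card (mono_colourings V E ends q B)
     \<le> q ^ card ((\<Union>e\<in>X. ends e) \<inter> (\<Union>e\<in>E - X. ends e))
        * (card (mono_colourings V E ends q (splice X A B)) * card (mono_colourings V E ends q (splice X B A)))"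
proof -
  have D: "(\<Union>e\<in>X. ends e) \<inter> (\<Union>e\<in>E - X. ends e) \<subseteq> V" using ends by auto
  have "card (mono_colourings V E ends q A) * card (mono_colourings V E ends q B)
    \<le> q ^ card ((\<Union>e\<in>X. ends e) \<inter> (\<Union>e\<in>E - X. ends e))
      * card {(\<sigma>, \<tau>) \<in> mono_colourings V E ends q A \<times> mono_colourings V E ends q B.
               \<forall>v\<in>(\<Union>e\<in>X. ends e) \<inter> (\<Union>e\<in>E - X. ends e). \<sigma> v = \<tau> v}"
    using card_mono_colourings_pairs_le_agreeing[OF V q ends D, of A B] by (simp add: card_cartesian_product)
  also have "\<dots> \<le> q ^ card ((\<Union>e\<in>X. ends e) \<inter> (\<Union>e\<in>E - X. ends e))
        * (card (mono_colourings V E ends q (splice X A B)) * card (mono_colourings V E ends q (splice X B A)))"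
    using card_agreeing_pairs_le_swapped[OF V AB, where q = q and X = X]
    by (simp add: card_cartesian_product)
  finally show ?thesis .
qed

section \<open>Spectra of reversible stochastic matrices\<close>

lemma finite_is_eigenvalue:
  fixes S :: "'s set" and P :: "'s \<Rightarrow> 's \<Rightarrow> real"
  assumes "finite S"
  shows "finite {\<xi>. is_eigenvalue S P \<xi>}"
proof -
  obtain xs where xs: "distinct xs" "set xs = S" using finite_distinct_list[OF assms] by blast
  define n where "n = length xs"
  have bij: "bij_betw ((!) xs) {..<n} S" using bij_betw_nth[OF xs(1) _ ] xs(2) n_def by auto
  define A :: "complex mat" where "A = mat n n (\<lambda>(i,j). complex_of_real (P (xs!i) (xs!j)))"
  have A: "A \<in> carrier_mat n n" unfolding A_def by auto
  have "{\<xi>. is_eigenvalue S P \<xi>} \<subseteq> spectrum A"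
  proof
    fix \<xi> assume "\<xi> \<in> {\<xi>. is_eigenvalue S P \<xi>}"
    then obtain f where f1: "\<exists>x\<in>S. f x \<noteq> 0"
      and f2: "\<forall>x\<in>S. (\<Sum>y\<in>S. complex_of_real (P x y) * f y) = \<xi> * f x"
      unfolding is_eigenvalue_def by auto
    define v where "v = vec n (\<lambda>i. f (xs!i))"
    have vc: "v \<in> carrier_vec n" unfolding v_def by auto
    from f1 obtain x where x: "x \<in> S" "f x \<noteq> 0" by auto
    then obtain i where i: "i < n" "xs!i = x" using bij unfolding bij_betw_def by auto
    have "v \<noteq> 0\<^sub>v n"
    proof
      assume "v = 0\<^sub>v n"
      then have "v $ i = 0" using i by auto
      then show False using i x unfolding v_def by auto
    qed
    moreover have "A *\<^sub>v v = \<xi> \<cdot>\<^sub>v v"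
    proof (rule eq_vecI)
      fix i assume i: "i < dim_vec (\<xi> \<cdot>\<^sub>v v)"
      then have i': "i < n" unfolding v_def by auto
      have "(A *\<^sub>v v) $ i = (\<Sum>j<n. complex_of_real (P (xs!i) (xs!j)) * f (xs!j))"
        using i' unfolding A_def v_def
        by (auto simp: mult_mat_vec_def scalar_prod_def lessThan_atLeast0 intro!: sum.cong)
      also have "\<dots> = (\<Sum>y\<in>S. complex_of_real (P (xs!i) y) * f y)"
        by (rule sum.reindex_bij_betw[OF bij])
      also have "\<dots> = \<xi> * f (xs!i)" using f2 i' bij unfolding bij_betw_def by auto
      finally show "(A *\<^sub>v v) $ i = (\<xi> \<cdot>\<^sub>v v) $ i" using i' unfolding v_def by simp
    qed (auto simp: A_def v_def)
    ultimately have "eigenvalue A \<xi>" unfolding eigenvalue_def eigenvector_def using vc A by auto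
    then show "\<xi> \<in> spectrum A" unfolding spectrum_def by auto
  qed
  then show ?thesis using card_finite_spectrum(1)[OF A] finite_subset by blast
qed

locale reversible_chain =
  fixes S :: "'s set" and \<pi> :: "'s \<Rightarrow> real" and P :: "'s \<Rightarrow> 's \<Rightarrow> real"
  assumes finite_states: "finite S"
    and weight_pos: "\<And>x. x \<in> S \<Longrightarrow> 0 < \<pi> x"
    and reversible: "\<And>x y. x \<in> S \<Longrightarrow> y \<in> S \<Longrightarrow> \<pi> x * P x y = \<pi> y * P y x"
    and row_sum: "\<And>x. x \<in> S \<Longrightarrow> (\<Sum>y\<in>S. P x y) = 1"
begin

definition sq_norm :: "('s \<Rightarrow> real) \<Rightarrow> real" where
  "sq_norm u = (\<Sum>x\<in>S. \<pi> x * (u x)\<^sup>2)"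

definition quad_form :: "('s \<Rightarrow> real) \<Rightarrow> real" where
  "quad_form u = (\<Sum>x\<in>S. \<Sum>y\<in>S. \<pi> x * P x y * u x * u y)"

lemma eigenvector_mean_zero:
  assumes eig: "\<forall>x\<in>S. (\<Sum>y\<in>S. complex_of_real (P x y) * f y) = \<xi> * f x" and "\<xi> \<noteq> 1"
  shows "(\<Sum>x\<in>S. complex_of_real (\<pi> x) * f x) = 0"
proof -
  have "\<xi> * (\<Sum>x\<in>S. complex_of_real (\<pi> x) * f x) = (\<Sum>x\<in>S. complex_of_real (\<pi> x) * (\<xi> * f x))"
    by (simp add: sum_distrib_left mult_ac)
  also have "\<dots> = (\<Sum>x\<in>S. complex_of_real (\<pi> x) * (\<Sum>y\<in>S. complex_of_real (P x y) * f y))"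
    using eig by simp
  also have "\<dots> = (\<Sum>x\<in>S. \<Sum>y\<in>S. complex_of_real (\<pi> x * P x y) * f y)"
    by (simp add: sum_distrib_left mult.assoc)
  also have "\<dots> = (\<Sum>y\<in>S. \<Sum>x\<in>S. complex_of_real (\<pi> y * P y x) * f y)"
    by (subst sum.swap) (simp add: reversible)
  also have "\<dots> = (\<Sum>y\<in>S. complex_of_real (\<pi> y * (\<Sum>x\<in>S. P y x)) * f y)"
    by (simp add: sum_distrib_left sum_distrib_right)
  also have "\<dots> = (\<Sum>x\<in>S. complex_of_real (\<pi> x) * f x)"
    using row_sum by simp
  finally have "(\<xi> - 1) * (\<Sum>x\<in>S. complex_of_real (\<pi> x) * f x) = 0" by (simp add: algebra_simps)
  then show ?thesis using \<open>\<xi> \<noteq> 1\<close> by simp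
qed

text \<open>The eigenvalue equation tested against \<open>\<pi> \<cdot> cnj f\<close>: since \<open>\<pi> P\<close> is symmetric, the
  imaginary parts of the two cross terms cancel, so every eigenvalue is a real Rayleigh quotient.\<close>

lemma eigenvalue_rayleigh_quotient:
  assumes eig: "\<forall>x\<in>S. (\<Sum>y\<in>S. complex_of_real (P x y) * f y) = \<xi> * f x"
  shows "\<xi> * complex_of_real (sq_norm (\<lambda>x. Re (f x)) + sq_norm (\<lambda>x. Im (f x)))
       = complex_of_real (quad_form (\<lambda>x. Re (f x)) + quad_form (\<lambda>x. Im (f x)))"
proof -
  define u where "u = (\<lambda>x. Re (f x))"
  define v where "v = (\<lambda>x. Im (f x))"
  have "cnj (f x) * f x = complex_of_real ((u x)\<^sup>2 + (v x)\<^sup>2)" for x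
    using complex_mult_cnj[of "f x"] unfolding u_def v_def by (simp add: mult.commute)
  then have "complex_of_real (\<pi> x) * cnj (f x) * (\<xi> * f x) = \<xi> * complex_of_real (\<pi> x * ((u x)\<^sup>2 + (v x)\<^sup>2))"
    for x by (simp add: mult_ac)
  then have "\<xi> * complex_of_real (sq_norm u + sq_norm v)
      = (\<Sum>x\<in>S. complex_of_real (\<pi> x) * cnj (f x) * (\<xi> * f x))"
    unfolding sq_norm_def by (simp add: sum_distrib_left sum.distrib distrib_left)
  also have "\<dots> = (\<Sum>x\<in>S. complex_of_real (\<pi> x) * cnj (f x) * (\<Sum>y\<in>S. complex_of_real (P x y) * f y))"
    using eig by simp
  also have "\<dots> = (\<Sum>x\<in>S. \<Sum>y\<in>S. complex_of_real (\<pi> x * P x y) * (cnj (f x) * f y))"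
    by (simp add: sum_distrib_left mult_ac)
  also have "\<dots> = complex_of_real (quad_form u + quad_form v)"
  proof (rule complex_eqI)
    have swap: "(\<Sum>x\<in>S. \<Sum>y\<in>S. \<pi> x * P x y * (v x * u y)) = (\<Sum>x\<in>S. \<Sum>y\<in>S. \<pi> x * P x y * (u x * v y))"
      by (subst sum.swap) (intro sum.cong refl, simp add: reversible mult_ac)
    show "Im (\<Sum>x\<in>S. \<Sum>y\<in>S. complex_of_real (\<pi> x * P x y) * (cnj (f x) * f y)) = Im (complex_of_real (quad_form u + quad_form v))"
      using swap unfolding u_def v_def by (simp add: Im_sum sum_subtractf algebra_simps)
  qed (simp add: Re_sum quad_form_def u_def v_def sum.distrib algebra_simps)
  finally show ?thesis unfolding u_def v_def .
qed

lemma eigenvalue_norm_le: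
  assumes quad_form_nonneg: "\<And>u. 0 \<le> quad_form u"
    and poincare: "\<And>u. (\<Sum>x\<in>S. \<pi> x * u x) = 0 \<Longrightarrow> quad_form u \<le> c * sq_norm u"
    and eig: "is_eigenvalue S P \<xi>" and "\<xi> \<noteq> 1"
  shows "cmod \<xi> \<le> c"
proof -
  obtain f where f_ne: "\<exists>x\<in>S. f x \<noteq> 0"
    and f_eig: "\<forall>x\<in>S. (\<Sum>y\<in>S. complex_of_real (P x y) * f y) = \<xi> * f x"
    using eig unfolding is_eigenvalue_def by blast
  define u where "u = (\<lambda>x. Re (f x))"
  define v where "v = (\<lambda>x. Im (f x))"
  have mean: "(\<Sum>x\<in>S. complex_of_real (\<pi> x) * f x) = 0"
    by (rule eigenvector_mean_zero[OF f_eig \<open>\<xi> \<noteq> 1\<close>])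
  have "(\<Sum>x\<in>S. \<pi> x * u x) = Re (\<Sum>x\<in>S. complex_of_real (\<pi> x) * f x)"
    "(\<Sum>x\<in>S. \<pi> x * v x) = Im (\<Sum>x\<in>S. complex_of_real (\<pi> x) * f x)"
    unfolding u_def v_def by (simp_all add: Re_sum Im_sum)
  then have "quad_form u + quad_form v \<le> c * (sq_norm u + sq_norm v)"
    using poincare mean by (simp add: distrib_left add_mono)
  moreover have norm_pos: "0 < sq_norm u + sq_norm v"
  proof -
    obtain x where x: "x \<in> S" "f x \<noteq> 0" using f_ne by blast
    then have "0 < \<pi> x * ((u x)\<^sup>2 + (v x)\<^sup>2)"
      using weight_pos unfolding u_def v_def by (simp add: complex_eq_iff sum_power2_gt_zero_iff)
    also have "\<dots> \<le> sq_norm u + sq_norm v"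
      unfolding sq_norm_def sum.distrib[symmetric] distrib_left[symmetric]
      by (rule member_le_sum[OF x(1)]) (use finite_states weight_pos in \<open>auto intro!: mult_nonneg_nonneg simp: less_imp_le\<close>)
    finally show ?thesis .
  qed
  moreover have \<xi>: "\<xi> = complex_of_real ((quad_form u + quad_form v) / (sq_norm u + sq_norm v))"
  proof -
    have "complex_of_real (sq_norm u + sq_norm v) \<noteq> 0" using norm_pos by (simp only: of_real_eq_0_iff)
    then show ?thesis
      using eigenvalue_rayleigh_quotient[OF f_eig] unfolding u_def v_def of_real_divide
      by (metis nonzero_mult_div_cancel_right)
  qed
  moreover have "cmod \<xi> = (quad_form u + quad_form v) / (sq_norm u + sq_norm v)"
    unfolding \<xi> norm_of_real using quad_form_nonneg[of u] quad_form_nonneg[of v] norm_pos by simp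
  ultimately show ?thesis by (simp add: divide_le_eq)
qed

lemma spectral_gap_ge:
  assumes "0 \<le> c" and "\<And>\<xi>. is_eigenvalue S P \<xi> \<Longrightarrow> \<xi> \<noteq> 1 \<Longrightarrow> cmod \<xi> \<le> c"
  shows "1 - c \<le> spectral_gap S P"
proof -
  have "finite {cmod \<xi> |\<xi>. is_eigenvalue S P \<xi> \<and> \<xi> \<noteq> 1}"
    using finite_is_eigenvalue[OF finite_states, of P] by (auto intro: finite_subset)
  then have "Max (insert 0 {cmod \<xi> |\<xi>. is_eigenvalue S P \<xi> \<and> \<xi> \<noteq> 1}) \<le> c"
    using assms by (auto intro!: Max.boundedI)
  then show ?thesis unfolding spectral_gap_def by simp
qed

lemma pairwise_variance:
  "(\<Sum>x\<in>S. \<Sum>y\<in>S. \<pi> x * \<pi> y * (u y - u x)\<^sup>2)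
     = 2 * (\<Sum>x\<in>S. \<pi> x) * sq_norm u - 2 * (\<Sum>x\<in>S. \<pi> x * u x)\<^sup>2"
proof -
  have "(\<Sum>x\<in>S. \<Sum>y\<in>S. \<pi> x * \<pi> y * (u y - u x)\<^sup>2)
      = (\<Sum>x\<in>S. \<Sum>y\<in>S. \<pi> x * (\<pi> y * (u y)\<^sup>2) + (\<pi> x * (u x)\<^sup>2) * \<pi> y - 2 * ((\<pi> x * u x) * (\<pi> y * u y)))"
    by (intro sum.cong refl) (simp add: power2_eq_square algebra_simps)
  also have "\<dots> = (\<Sum>x\<in>S. \<pi> x) * sq_norm u + sq_norm u * (\<Sum>x\<in>S. \<pi> x) - 2 * (\<Sum>x\<in>S. \<pi> x * u x)\<^sup>2"
    unfolding sq_norm_def power2_eq_square[of "sum _ _"] sum_product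
    by (simp only: sum_subtractf sum.distrib sum_distrib_left)
  finally show ?thesis by simp
qed

end

section \<open>The Swendsen--Wang dynamics for the random-cluster model\<close>

lemma two_point_variance:
  fixes a r x y :: real
  assumes "0 < a" "0 < r"
  shows "a * x\<^sup>2 + a * r * y\<^sup>2 - (a * x + a * r * y)\<^sup>2 / (a * (1 + r)) = a * r / (1 + r) * (y - x)\<^sup>2"
proof -
  have "(a * x\<^sup>2 + a * r * y\<^sup>2) * (a * (1 + r)) - (a * x + a * r * y)\<^sup>2 = a * r * (y - x)\<^sup>2 * a"
    by (simp add: power2_eq_square algebra_simps)
  moreover have "a * (1 + r) \<noteq> 0" "1 + r \<noteq> 0" using assms by auto
  ultimately show ?thesis by (simp add: field_simps)
qed

locale swendsen_wang_rc =
  fixes V :: "'v set" and E :: "'e set" and ends :: "'e \<Rightarrow> 'v set" and p :: real and q :: nat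
  assumes graph: "finite_graph V E ends" and p_pos: "0 < p" and p_less_1: "p < 1" and q_pos: "1 \<le> q"
begin

lemma finite_V: "finite V" and finite_E: "finite E"
  and ends_valid: "\<forall>e\<in>E. ends e \<subseteq> V \<and> ends e \<noteq> {} \<and> card (ends e) \<le> 2"
  using graph unfolding finite_graph_def by auto

lemma ends_subset: "\<forall>e\<in>E. ends e \<subseteq> V"
  using ends_valid by auto

abbreviation P :: "'e set \<Rightarrow> 'e set \<Rightarrow> real" where "P \<equiv> SW_RC V E ends p q"
abbreviation mon :: "('v \<Rightarrow> nat) \<Rightarrow> 'e set" where "mon \<sigma> \<equiv> mono_edges E ends \<sigma>"
abbreviation Col :: "('v \<Rightarrow> nat) set" where "Col \<equiv> V \<rightarrow>\<^sub>E {1..q}"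

text \<open>\<open>\<mu>\<close> is the random-cluster measure up to the normalising constant \<open>Z\<close>.\<close>

definition w :: "'e set \<Rightarrow> real" where "w A = (p / (1 - p)) ^ card A"
definition \<mu> :: "'e set \<Rightarrow> real" where "\<mu> A = w A * real q ^ num_comp V ends A"
definition Z :: real where "Z = (\<Sum>A\<in>Pow E. \<mu> A)"
definition n_col :: "'e set \<Rightarrow> real" where "n_col F = real (card (mono_colourings V E ends q F))"
definition sw_kernel :: "'e set \<Rightarrow> 'e set \<Rightarrow> real" where
  "sw_kernel A B = (\<Sum>\<sigma>\<in>Col. (1 - p) ^ card (mon \<sigma>) * of_bool (A \<union> B \<subseteq> mon \<sigma>))"

lemma finite_Col: "finite Col"
  using finite_V by (auto intro!: finite_PiE)

lemma mon_subset: "mon \<sigma> \<subseteq> E"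
  unfolding mono_edges_def by auto

lemma finite_mon: "finite (mon \<sigma>)"
  using finite_subset[OF mon_subset finite_E] .

lemma w_pos: "0 < w A"
  unfolding w_def using p_pos p_less_1 by simp

lemma w_insert: "finite A \<Longrightarrow> e \<notin> A \<Longrightarrow> w (insert e A) = w A * (p / (1 - p))"
  unfolding w_def by simp

lemma \<mu>_pos: "0 < \<mu> A"
  unfolding \<mu>_def using w_pos q_pos by simp

lemma Z_pos: "0 < Z"
  unfolding Z_def using \<mu>_pos finite_E by (intro sum_pos) auto

lemma \<mu>_eq_w_n_col: "A \<subseteq> E \<Longrightarrow> \<mu> A = w A * n_col A"
  unfolding \<mu>_def n_col_def using card_mono_colourings[OF finite_V _ ends_subset] by simp

lemma n_col_eq_sum: "n_col F = (\<Sum>\<sigma>\<in>Col. of_bool (F \<subseteq> mon \<sigma>))"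
  unfolding n_col_def mono_colourings_def of_bool_def using sum.inter_filter[OF finite_Col, of "\<lambda>_. 1::real"]
  by simp

lemma P_eq: "P A B = w B * sw_kernel A B / real q ^ num_comp V ends A"
  unfolding SW_RC_def w_def sw_kernel_def of_bool_def by simp

lemma \<mu>_P_eq: "\<mu> A * P A B = w A * w B * sw_kernel A B"
  unfolding P_eq \<mu>_def using q_pos by simp

lemma sum_Pow_w: "finite T \<Longrightarrow> (1 - p) ^ card T * (\<Sum>B\<in>Pow T. w B) = 1"
  unfolding w_def using sum_Pow_power_card[of T "p / (1 - p)"] p_less_1
  by (simp add: power_one_over field_simps flip: power_mult_distrib)

lemma row_sum_P:
  assumes "A \<subseteq> E"
  shows "(\<Sum>B\<in>Pow E. P A B) = 1"
proof -
  have "(\<Sum>B\<in>Pow E. w B * sw_kernel A B)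
      = (\<Sum>\<sigma>\<in>Col. of_bool (A \<subseteq> mon \<sigma>) * ((1 - p) ^ card (mon \<sigma>) * (\<Sum>B\<in>Pow E. if B \<subseteq> mon \<sigma> then w B else 0)))"
    unfolding sw_kernel_def sum_distrib_left
    by (subst sum.swap) (auto intro!: sum.cong)
  also have "\<dots> = n_col A"
    unfolding n_col_eq_sum sum_Pow_if_subset[OF finite_E mon_subset] using sum_Pow_w[OF finite_mon] by simp
  also have "\<dots> = real q ^ num_comp V ends A"
    using \<mu>_eq_w_n_col[OF assms] w_pos unfolding \<mu>_def by (metis mult_cancel_left less_irrefl)
  finally have "(\<Sum>B\<in>Pow E. w A * w B * sw_kernel A B) = \<mu> A"
    unfolding \<mu>_def mult.assoc sum_distrib_left[symmetric] by simp
  then show ?thesis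
    using \<mu>_pos[of A] by (simp flip: \<mu>_P_eq sum_distrib_left)
qed

sublocale reversible_chain "Pow E" \<mu> P
proof
  show "\<mu> A * P A B = \<mu> B * P B A" for A B
    unfolding \<mu>_P_eq sw_kernel_def by (simp add: Un_commute mult.commute)
qed (use finite_E \<mu>_pos row_sum_P in auto)

lemma bilinear_sum_eq:
  "(\<Sum>A\<in>Pow E. \<Sum>B\<in>Pow E. \<mu> A * P A B * a A * b B)
   = (\<Sum>\<sigma>\<in>Col. (1 - p) ^ card (mon \<sigma>) * (\<Sum>A\<in>Pow (mon \<sigma>). w A * a A) * (\<Sum>B\<in>Pow (mon \<sigma>). w B * b B))"
proof -
  define f where "f = (\<lambda>\<sigma> A. if A \<subseteq> mon \<sigma> then w A * a A else 0)"
  define g where "g = (\<lambda>\<sigma> B. if B \<subseteq> mon \<sigma> then w B * b B else 0)"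
  have "\<mu> A * P A B * a A * b B = (\<Sum>\<sigma>\<in>Col. (1 - p) ^ card (mon \<sigma>) * (f \<sigma> A * g \<sigma> B))" for A B
  proof -
    have "\<mu> A * P A B * a A * b B = sw_kernel A B * (w A * a A) * (w B * b B)"
      unfolding \<mu>_P_eq by (simp add: algebra_simps)
    also have "\<dots> = (\<Sum>\<sigma>\<in>Col. (1 - p) ^ card (mon \<sigma>) * (f \<sigma> A * g \<sigma> B))"
      unfolding sw_kernel_def sum_distrib_right by (intro sum.cong refl) (auto simp: f_def g_def)
    finally show ?thesis .
  qed
  then have "(\<Sum>A\<in>Pow E. \<Sum>B\<in>Pow E. \<mu> A * P A B * a A * b B)
      = (\<Sum>A\<in>Pow E. \<Sum>\<sigma>\<in>Col. \<Sum>B\<in>Pow E. (1 - p) ^ card (mon \<sigma>) * (f \<sigma> A * g \<sigma> B))"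
    by (simp only: sum.swap[of _ Col])
  also have "\<dots> = (\<Sum>\<sigma>\<in>Col. \<Sum>A\<in>Pow E. \<Sum>B\<in>Pow E. (1 - p) ^ card (mon \<sigma>) * (f \<sigma> A * g \<sigma> B))"
    by (rule sum.swap)
  also have "\<dots> = (\<Sum>\<sigma>\<in>Col. (1 - p) ^ card (mon \<sigma>) * (\<Sum>A\<in>Pow E. f \<sigma> A) * (\<Sum>B\<in>Pow E. g \<sigma> B))"
  proof (rule sum.cong[OF refl])
    fix \<sigma>
    have "(1 - p) ^ card (mon \<sigma>) * (\<Sum>A\<in>Pow E. f \<sigma> A) * (\<Sum>B\<in>Pow E. g \<sigma> B)
        = (1 - p) ^ card (mon \<sigma>) * (\<Sum>A\<in>Pow E. \<Sum>B\<in>Pow E. f \<sigma> A * g \<sigma> B)"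
      by (simp only: mult.assoc sum_product)
    then show "(\<Sum>A\<in>Pow E. \<Sum>B\<in>Pow E. (1 - p) ^ card (mon \<sigma>) * (f \<sigma> A * g \<sigma> B))
        = (1 - p) ^ card (mon \<sigma>) * (\<Sum>A\<in>Pow E. f \<sigma> A) * (\<Sum>B\<in>Pow E. g \<sigma> B)"
      by (simp only: sum_distrib_left)
  qed
  finally show ?thesis
    unfolding f_def g_def sum_Pow_if_subset[OF finite_E mon_subset] .
qed

lemma quad_form_eq: "quad_form u = (\<Sum>\<sigma>\<in>Col. (1 - p) ^ card (mon \<sigma>) * (\<Sum>A\<in>Pow (mon \<sigma>). w A * u A)\<^sup>2)"
  unfolding quad_form_def bilinear_sum_eq by (simp add: power2_eq_square mult.assoc)

lemma quad_form_nonneg: "0 \<le> quad_form u"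
  unfolding quad_form_eq using p_less_1 by (intro sum_nonneg mult_nonneg_nonneg) auto

lemma sq_norm_eq:
  "sq_norm u = (\<Sum>\<sigma>\<in>Col. (1 - p) ^ card (mon \<sigma>) * (\<Sum>A\<in>Pow (mon \<sigma>). w A * (u A)\<^sup>2) * (\<Sum>B\<in>Pow (mon \<sigma>). w B))"
proof -
  have "sq_norm u = (\<Sum>A\<in>Pow E. \<Sum>B\<in>Pow E. \<mu> A * P A B * (u A)\<^sup>2 * 1)"
    unfolding sq_norm_def
    by (intro sum.cong refl) (simp add: row_sum_P flip: sum_distrib_left sum_distrib_right)
  then show ?thesis unfolding bilinear_sum_eq by simp
qed

text \<open>\<open>local_variance T u / (\<Sum>B\<in>Pow T. w B)\<^sup>2\<close> is the variance of \<open>u\<close> under \<open>p\<close>-percolation on \<open>T\<close>.\<close>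

definition local_variance :: "'e set \<Rightarrow> ('e set \<Rightarrow> real) \<Rightarrow> real" where
  "local_variance T u = (\<Sum>B\<in>Pow T. w B) * (\<Sum>A\<in>Pow T. w A * (u A)\<^sup>2) - (\<Sum>A\<in>Pow T. w A * u A)\<^sup>2"

lemma sq_norm_minus_quad_form_eq:
  "sq_norm u - quad_form u = (\<Sum>\<sigma>\<in>Col. (1 - p) ^ card (mon \<sigma>) * local_variance (mon \<sigma>) u)"
  unfolding sq_norm_eq quad_form_eq local_variance_def by (simp add: sum_subtractf[symmetric] algebra_simps)

lemma local_variance_nonneg:
  assumes "finite T"
  shows "0 \<le> local_variance T u"
proof -
  have "(\<Sum>A\<in>Pow T. sqrt (w A) * (sqrt (w A) * u A))\<^sup>2
      \<le> (\<Sum>A\<in>Pow T. (sqrt (w A))\<^sup>2) * (\<Sum>A\<in>Pow T. (sqrt (w A) * u A)\<^sup>2)"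
    by (rule Cauchy_Schwarz_ineq_sum)
  then show ?thesis
    unfolding local_variance_def using w_pos
    by (simp add: power_mult_distrib less_imp_le mult.assoc[symmetric])
qed

text \<open>Pairing each \<open>A \<subseteq> T - {e}\<close> with \<open>insert e A\<close> and applying Cauchy--Schwarz to the pair sums
  bounds the variance below by the expected squared effect of resampling the single edge \<open>e\<close>.\<close>

lemma local_variance_ge_edge:
  assumes T: "finite T" and e: "e \<in> T"
  shows "(\<Sum>B\<in>Pow T. w B) * (\<Sum>A\<in>Pow (T - {e}). p * w A * (u (insert e A) - u A)\<^sup>2) \<le> local_variance T u"
proof -
  define r where "r = p / (1 - p)"
  have r: "0 < r" unfolding r_def using p_pos p_less_1 by simp
  define s where "s = (\<lambda>A. w A + w (insert e A))"
  define t where "t = (\<lambda>A. w A * u A + w (insert e A) * u (insert e A))"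
  define v where "v = (\<lambda>A. w A * (u A)\<^sup>2 + w (insert e A) * (u (insert e A))\<^sup>2)"
  have wi: "w (insert e A) = w A * r" if "A \<in> Pow (T - {e})" for A
    using that w_insert[of A e] finite_subset[OF _ T] unfolding r_def by auto
  have s_pos: "0 < s A" for A unfolding s_def using w_pos by (simp add: add_pos_pos)
  have split: "(\<Sum>B\<in>Pow T. w B) = (\<Sum>A\<in>Pow (T - {e}). s A)"
    "(\<Sum>A\<in>Pow T. w A * (u A)\<^sup>2) = (\<Sum>A\<in>Pow (T - {e}). v A)"
    "(\<Sum>A\<in>Pow T. w A * u A) = (\<Sum>A\<in>Pow (T - {e}). t A)"
    unfolding s_def v_def t_def by (simp_all add: sum_Pow_remove[OF T e])
  have CS: "(\<Sum>A\<in>Pow (T - {e}). t A)\<^sup>2 \<le> (\<Sum>A\<in>Pow (T - {e}). s A) * (\<Sum>A\<in>Pow (T - {e}). (t A)\<^sup>2 / s A)"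
  proof -
    have "(\<Sum>A\<in>Pow (T - {e}). sqrt (s A) * (t A / sqrt (s A)))\<^sup>2
        \<le> (\<Sum>A\<in>Pow (T - {e}). (sqrt (s A))\<^sup>2) * (\<Sum>A\<in>Pow (T - {e}). (t A / sqrt (s A))\<^sup>2)"
      by (rule Cauchy_Schwarz_ineq_sum)
    moreover have "sqrt (s A) * (t A / sqrt (s A)) = t A" for A
      using s_pos[of A] by simp
    ultimately show ?thesis using s_pos by (simp add: power_divide less_imp_le)
  qed
  have pair: "v A - (t A)\<^sup>2 / s A = p * w A * (u (insert e A) - u A)\<^sup>2" if A: "A \<in> Pow (T - {e})" for A
  proof -
    have "s A = w A * (1 + r)" unfolding s_def using wi[OF A] by (simp add: algebra_simps)
    moreover have "p = r / (1 + r)" unfolding r_def using p_pos p_less_1 by (simp add: field_simps)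
    ultimately show ?thesis
      unfolding v_def t_def wi[OF A] using two_point_variance[OF w_pos r, of A "u A" "u (insert e A)"]
      by (simp add: mult.commute mult.left_commute)
  qed
  have "(\<Sum>B\<in>Pow T. w B) * (\<Sum>A\<in>Pow (T - {e}). p * w A * (u (insert e A) - u A)\<^sup>2)
      = (\<Sum>A\<in>Pow (T - {e}). s A) * (\<Sum>A\<in>Pow (T - {e}). v A - (t A)\<^sup>2 / s A)"
    by (simp only: split(1) sum.cong[OF refl pair])
  also have "\<dots> = (\<Sum>A\<in>Pow (T - {e}). s A) * (\<Sum>A\<in>Pow (T - {e}). v A)
        - (\<Sum>A\<in>Pow (T - {e}). s A) * (\<Sum>A\<in>Pow (T - {e}). (t A)\<^sup>2 / s A)"
    by (simp only: sum_subtractf right_diff_distrib)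
  also have "\<dots> \<le> local_variance T u"
    unfolding local_variance_def split using CS by simp
  finally show ?thesis .
qed

lemma sq_norm_minus_quad_form_nonneg: "0 \<le> sq_norm u - quad_form u"
  unfolding sq_norm_minus_quad_form_eq using p_less_1 local_variance_nonneg[OF finite_mon]
  by (intro sum_nonneg mult_nonneg_nonneg) auto

text \<open>The Dirichlet form of single-edge heat-bath updates at \<open>e\<close>.\<close>

definition edge_energy :: "('e set \<Rightarrow> real) \<Rightarrow> 'e \<Rightarrow> real" where
  "edge_energy u e = (\<Sum>A\<in>Pow (E - {e}). (1 - p) * \<mu> (insert e A) * (u (insert e A) - u A)\<^sup>2)"

lemma edge_energy_eq:
  assumes "e \<in> E"
  shows "edge_energy u e
    = (\<Sum>A\<in>Pow (E - {e}). \<Sum>\<sigma>\<in>Col. of_bool (insert e A \<subseteq> mon \<sigma>) * (p * w A * (u (insert e A) - u A)\<^sup>2))"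
  unfolding edge_energy_def
proof (rule sum.cong[OF refl])
  fix A assume "A \<in> Pow (E - {e})"
  then have A: "insert e A \<subseteq> E" "finite A" "e \<notin> A" using assms finite_E finite_subset by auto
  have "(1 - p) * \<mu> (insert e A) = p * w A * n_col (insert e A)"
    using \<mu>_eq_w_n_col[OF A(1)] w_insert[OF A(2,3)] p_less_1 by simp
  then show "(1 - p) * \<mu> (insert e A) * (u (insert e A) - u A)\<^sup>2
      = (\<Sum>\<sigma>\<in>Col. of_bool (insert e A \<subseteq> mon \<sigma>) * (p * w A * (u (insert e A) - u A)\<^sup>2))"
    unfolding n_col_eq_sum sum_distrib_right[symmetric] by (simp add: mult_ac)
qed

lemma sum_mon_edges_eq:
  fixes F :: "'e \<Rightarrow> 'e set \<Rightarrow> real"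
  shows "(\<Sum>\<sigma>\<in>Col. \<Sum>e\<in>mon \<sigma>. \<Sum>A\<in>Pow (mon \<sigma> - {e}). F e A)
    = (\<Sum>e\<in>E. \<Sum>A\<in>Pow (E - {e}). \<Sum>\<sigma>\<in>Col. of_bool (insert e A \<subseteq> mon \<sigma>) * F e A)"
proof -
  have inner: "(\<Sum>A\<in>Pow (E - {e}). of_bool (insert e A \<subseteq> mon \<sigma>) * F e A)
      = (if e \<in> mon \<sigma> then (\<Sum>A\<in>Pow (mon \<sigma> - {e}). F e A) else 0)" for \<sigma> e
  proof (cases "e \<in> mon \<sigma>")
    case True
    have "(\<Sum>A\<in>Pow (E - {e}). of_bool (insert e A \<subseteq> mon \<sigma>) * F e A)
        = (\<Sum>A\<in>Pow (E - {e}). if A \<subseteq> mon \<sigma> - {e} then F e A else 0)"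
      using True by (intro sum.cong refl) auto
    also have "\<dots> = (\<Sum>A\<in>Pow (mon \<sigma> - {e}). F e A)"
      by (rule sum_Pow_if_subset) (use finite_E mon_subset in auto)
    finally show ?thesis using True by simp
  next
    case False
    then have "\<not> insert e A \<subseteq> mon \<sigma>" for A by auto
    then show ?thesis using False by simp
  qed
  have "(\<Sum>e\<in>mon \<sigma>. \<Sum>A\<in>Pow (mon \<sigma> - {e}). F e A)
      = (\<Sum>e\<in>E. \<Sum>A\<in>Pow (E - {e}). of_bool (insert e A \<subseteq> mon \<sigma>) * F e A)" for \<sigma>
  proof -
    have "(\<Sum>e\<in>mon \<sigma>. \<Sum>A\<in>Pow (mon \<sigma> - {e}). F e A) = (\<Sum>e\<in>E \<inter> mon \<sigma>. \<Sum>A\<in>Pow (mon \<sigma> - {e}). F e A)"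
      by (simp only: Int_absorb1[OF mon_subset])
    then show ?thesis unfolding inner sum.inter_restrict[OF finite_E] .
  qed
  then have "(\<Sum>\<sigma>\<in>Col. \<Sum>e\<in>mon \<sigma>. \<Sum>A\<in>Pow (mon \<sigma> - {e}). F e A)
      = (\<Sum>e\<in>E. \<Sum>\<sigma>\<in>Col. \<Sum>A\<in>Pow (E - {e}). of_bool (insert e A \<subseteq> mon \<sigma>) * F e A)"
    by (simp only: sum.swap[of _ Col])
  also have "\<dots> = (\<Sum>e\<in>E. \<Sum>A\<in>Pow (E - {e}). \<Sum>\<sigma>\<in>Col. of_bool (insert e A \<subseteq> mon \<sigma>) * F e A)"
    by (intro sum.cong refl sum.swap)
  finally show ?thesis .
qed

lemma sum_edge_energy_le: "(\<Sum>e\<in>E. edge_energy u e) \<le> real (card E) * (sq_norm u - quad_form u)"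
proof -
  define F where "F = (\<lambda>e A. p * w A * (u (insert e A) - u A)\<^sup>2)"
  have per_colouring: "(\<Sum>e\<in>mon \<sigma>. \<Sum>A\<in>Pow (mon \<sigma> - {e}). F e A)
      \<le> real (card E) * ((1 - p) ^ card (mon \<sigma>) * local_variance (mon \<sigma>) u)" for \<sigma>
  proof -
    define c where "c = (1 - p) ^ card (mon \<sigma>)"
    have c: "0 \<le> c" unfolding c_def using p_less_1 by simp
    have "(\<Sum>A\<in>Pow (mon \<sigma> - {e}). F e A) \<le> c * local_variance (mon \<sigma>) u" if "e \<in> mon \<sigma>" for e
    proof -
      have "c * ((\<Sum>B\<in>Pow (mon \<sigma>). w B) * (\<Sum>A\<in>Pow (mon \<sigma> - {e}). F e A)) = (\<Sum>A\<in>Pow (mon \<sigma> - {e}). F e A)"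
        using sum_Pow_w[OF finite_mon, of \<sigma>] unfolding c_def by (metis mult.assoc mult_1)
      then show ?thesis
        using mult_left_mono[OF local_variance_ge_edge[OF finite_mon that, of u] c] unfolding F_def by linarith
    qed
    then have "(\<Sum>e\<in>mon \<sigma>. \<Sum>A\<in>Pow (mon \<sigma> - {e}). F e A) \<le> (\<Sum>e\<in>mon \<sigma>. c * local_variance (mon \<sigma>) u)"
      by (rule sum_mono)
    also have "\<dots> = real (card (mon \<sigma>)) * (c * local_variance (mon \<sigma>) u)" by simp
    also have "\<dots> \<le> real (card E) * (c * local_variance (mon \<sigma>) u)"
      using card_mono[OF finite_E mon_subset] c local_variance_nonneg[OF finite_mon]
      by (intro mult_right_mono) auto
    finally show ?thesis unfolding c_def .
  qed
  have "(\<Sum>e\<in>E. edge_energy u e) = (\<Sum>\<sigma>\<in>Col. \<Sum>e\<in>mon \<sigma>. \<Sum>A\<in>Pow (mon \<sigma> - {e}). F e A)"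
    unfolding sum_mon_edges_eq F_def by (intro sum.cong refl) (simp add: edge_energy_eq)
  also have "\<dots> \<le> real (card E) * (sq_norm u - quad_form u)"
    unfolding sq_norm_minus_quad_form_eq sum_distrib_left by (rule sum_mono[OF per_colouring])
  finally show ?thesis .
qed

lemma w_splice:
  assumes "finite A" "finite B"
  shows "w A * w B = w (splice X A B) * w (splice X B A)"
proof -
  have "card (splice X A B) = card (B \<inter> X) + card (A - X)" "card (splice X B A) = card (A \<inter> X) + card (B - X)"
    unfolding splice_def using assms by (auto intro: card_Un_disjoint)
  then show ?thesis
    unfolding w_def power_add[symmetric] using card_Int_Diff[OF assms(1), of X] card_Int_Diff[OF assms(2), of X]
    by (simp add: algebra_simps)
qed

text \<open>This is where the linear width enters: colourings of \<open>A\<close> and \<open>B\<close> can be exchanged on the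
  vertices of \<open>X\<close> once they agree on the at most \<open>l\<close> vertices shared by \<open>X\<close> and \<open>E - X\<close>.\<close>

lemma \<mu>_splice_le:
  assumes A: "A \<subseteq> E" and B: "B \<subseteq> E" and width: "card ((\<Union>e\<in>X. ends e) \<inter> (\<Union>e\<in>E - X. ends e)) \<le> l"
  shows "\<mu> A * \<mu> B \<le> real q ^ l * (\<mu> (splice X A B) * \<mu> (splice X B A))"
proof -
  have S: "splice X A B \<subseteq> E" "splice X B A \<subseteq> E" unfolding splice_def using A B by auto
  have "n_col A * n_col B \<le> real q ^ card ((\<Union>e\<in>X. ends e) \<inter> (\<Union>e\<in>E - X. ends e)) * (n_col (splice X A B) * n_col (splice X B A))"
    using card_mono_colourings_mult_le[OF finite_V q_pos ends_subset A B, of X]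
    unfolding n_col_def splice_def by (metis of_nat_le_iff of_nat_mult of_nat_power)
  also have "\<dots> \<le> real q ^ l * (n_col (splice X A B) * n_col (splice X B A))"
    using width q_pos by (intro mult_right_mono power_increasing) (auto simp: n_col_def)
  finally have col: "n_col A * n_col B \<le> real q ^ l * (n_col (splice X A B) * n_col (splice X B A))" .
  have "\<mu> A * \<mu> B = (w A * w B) * (n_col A * n_col B)"
    unfolding \<mu>_eq_w_n_col[OF A] \<mu>_eq_w_n_col[OF B] by (simp add: algebra_simps)
  also have "\<dots> \<le> (w A * w B) * (real q ^ l * (n_col (splice X A B) * n_col (splice X B A)))"
    using col w_pos by (intro mult_left_mono) (auto intro: less_imp_le)
  also have "\<dots> = real q ^ l * (\<mu> (splice X A B) * \<mu> (splice X B A))"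
    unfolding \<mu>_eq_w_n_col[OF S(1)] \<mu>_eq_w_n_col[OF S(2)]
      w_splice[OF finite_subset[OF A finite_E] finite_subset[OF B finite_E], of X]
    by (simp add: algebra_simps)
  finally show ?thesis .
qed

lemma \<mu>_le_insert:
  assumes "A \<subseteq> E - {e}" "e \<in> E"
  shows "\<mu> A \<le> real q * (1 - p) / p * \<mu> (insert e A)"
proof -
  have A: "A \<subseteq> E" "insert e A \<subseteq> E" "finite A" "e \<notin> A" using assms finite_E finite_subset by auto
  have "n_col A \<le> real q * n_col (insert e A)"
    unfolding n_col_def using card_mono_colourings_le_insert[OF finite_V q_pos assms(2) ends_valid, of A]
    by (metis of_nat_le_iff of_nat_mult)
  then have "w A * n_col A \<le> w A * (real q * n_col (insert e A))"
    using w_pos by (intro mult_left_mono) (auto intro: less_imp_le)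
  also have "\<dots> = real q * (1 - p) / p * (w (insert e A) * n_col (insert e A))"
    unfolding w_insert[OF A(3,4)] using p_pos p_less_1 by (simp add: field_simps)
  finally show ?thesis unfolding \<mu>_eq_w_n_col[OF A(1)] \<mu>_eq_w_n_col[OF A(2)] .
qed

lemma \<mu>_insert_le:
  assumes "A \<subseteq> E - {e}" "e \<in> E"
  shows "\<mu> (insert e A) \<le> p / (1 - p) * \<mu> A"
proof -
  have A: "A \<subseteq> E" "insert e A \<subseteq> E" "finite A" "e \<notin> A" using assms finite_E finite_subset by auto
  have "card (mono_colourings V E ends q (insert e A)) \<le> card (mono_colourings V E ends q A)"
    by (rule card_mono[OF finite_mono_colourings[OF finite_V]]) (auto simp: mono_colourings_def)
  then have "w A * (p / (1 - p)) * n_col (insert e A) \<le> w A * (p / (1 - p)) * n_col A"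
    unfolding n_col_def using w_pos[of A] p_pos p_less_1 by (intro mult_left_mono) auto
  then show ?thesis
    unfolding \<mu>_eq_w_n_col[OF A(1)] \<mu>_eq_w_n_col[OF A(2)] w_insert[OF A(3,4)] by (simp add: mult_ac)
qed

text \<open>Moving along the canonical path from \<open>A\<close> to \<open>B\<close> one edge \<open>e\<close> at a time: after the
  involution \<open>(A, B) \<mapsto> (splice X A B, splice X B A)\<close>, each step is a single-edge flip.\<close>

lemma splice_insert_step_le:
  assumes X: "X \<subseteq> E" and e: "e \<notin> X"
    and width: "card ((\<Union>e\<in>X. ends e) \<inter> (\<Union>e\<in>E - X. ends e)) \<le> l"
  shows "(\<Sum>A\<in>Pow E. \<Sum>B\<in>Pow E. \<mu> A * \<mu> B * (u (splice (insert e X) A B) - u (splice X A B))\<^sup>2)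
    \<le> real q ^ l * (\<Sum>S\<in>Pow E. \<Sum>T\<in>Pow E. \<mu> S * \<mu> T * (u (splice {e} S T) - u S)\<^sup>2)"
proof -
  define G where "G = (\<lambda>(S, T). \<mu> S * \<mu> T * (u (splice {e} S T) - u S)\<^sup>2)"
  define \<Phi> where "\<Phi> = (\<lambda>(A, B). (splice X A B, splice X B A))"
  have "(\<Sum>A\<in>Pow E. \<Sum>B\<in>Pow E. \<mu> A * \<mu> B * (u (splice (insert e X) A B) - u (splice X A B))\<^sup>2)
      = (\<Sum>x\<in>Pow E \<times> Pow E. case x of (A, B) \<Rightarrow> \<mu> A * \<mu> B * (u (splice (insert e X) A B) - u (splice X A B))\<^sup>2)"
    by (rule sum.cartesian_product)
  also have "\<dots> \<le> (\<Sum>x\<in>Pow E \<times> Pow E. real q ^ l * G (\<Phi> x))"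
  proof (rule sum_mono)
    fix x assume "x \<in> Pow E \<times> Pow E"
    then obtain A B where x: "x = (A, B)" "A \<subseteq> E" "B \<subseteq> E" by auto
    show "(case x of (A, B) \<Rightarrow> \<mu> A * \<mu> B * (u (splice (insert e X) A B) - u (splice X A B))\<^sup>2)
        \<le> real q ^ l * G (\<Phi> x)"
      using mult_right_mono[OF \<mu>_splice_le[OF x(2,3) width] zero_le_power2]
      unfolding x G_def \<Phi>_def splice_insert[OF e] by (simp add: mult.assoc)
  qed
  also have "\<dots> = real q ^ l * (\<Sum>x\<in>Pow E \<times> Pow E. G (\<Phi> x))"
    by (simp add: sum_distrib_left)
  also have "(\<Sum>x\<in>Pow E \<times> Pow E. G (\<Phi> x)) = (\<Sum>x\<in>Pow E \<times> Pow E. G x)"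
  proof (rule sum.reindex_bij_betw)
    have "\<Phi> x \<in> Pow E \<times> Pow E" if "x \<in> Pow E \<times> Pow E" for x
      using that unfolding \<Phi>_def splice_def by auto
    then show "bij_betw \<Phi> (Pow E \<times> Pow E) (Pow E \<times> Pow E)"
      by (intro bij_betwI[where g = \<Phi>]) (auto simp: \<Phi>_def splice_splice)
  qed
  also have "\<dots> = (\<Sum>S\<in>Pow E. \<Sum>T\<in>Pow E. \<mu> S * \<mu> T * (u (splice {e} S T) - u S)\<^sup>2)"
    unfolding G_def by (simp add: sum.cartesian_product)
  finally show ?thesis .
qed

lemma single_edge_flip_eq:
  assumes e: "e \<in> E"
  defines "a \<equiv> \<Sum>H\<in>Pow (E - {e}). \<mu> (insert e H)" and "b \<equiv> \<Sum>H\<in>Pow (E - {e}). \<mu> H"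
  shows "(\<Sum>S\<in>Pow E. \<Sum>T\<in>Pow E. \<mu> S * \<mu> T * (u (splice {e} S T) - u S)\<^sup>2)
    = (\<Sum>A\<in>Pow (E - {e}). (\<mu> A * a + \<mu> (insert e A) * b) * (u (insert e A) - u A)\<^sup>2)"
proof -
  have "(\<Sum>T\<in>Pow E. \<mu> S * \<mu> T * (u (splice {e} S T) - u S)\<^sup>2)
      = \<mu> S * b * (u (S - {e}) - u S)\<^sup>2 + \<mu> S * a * (u (insert e S) - u S)\<^sup>2" for S
  proof -
    have "(\<Sum>T\<in>Pow E. \<mu> S * \<mu> T * (u (splice {e} S T) - u S)\<^sup>2)
        = (\<Sum>H\<in>Pow (E - {e}). \<mu> S * (u (S - {e}) - u S)\<^sup>2 * \<mu> H + \<mu> S * (u (insert e S) - u S)\<^sup>2 * \<mu> (insert e H))"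
      unfolding sum_Pow_remove[OF finite_E e]
    proof (rule sum.cong[OF refl])
      fix H assume "H \<in> Pow (E - {e})"
      then have "splice {e} S H = S - {e}" "splice {e} S (insert e H) = insert e S"
        unfolding splice_def by auto
      then show "\<mu> S * \<mu> H * (u (splice {e} S H) - u S)\<^sup>2
          + \<mu> S * \<mu> (insert e H) * (u (splice {e} S (insert e H)) - u S)\<^sup>2
        = \<mu> S * (u (S - {e}) - u S)\<^sup>2 * \<mu> H + \<mu> S * (u (insert e S) - u S)\<^sup>2 * \<mu> (insert e H)"
        by (simp add: mult_ac)
    qed
    then show ?thesis
      unfolding a_def b_def by (simp add: sum.distrib flip: sum_distrib_left)
  qed
  then have "(\<Sum>S\<in>Pow E. \<Sum>T\<in>Pow E. \<mu> S * \<mu> T * (u (splice {e} S T) - u S)\<^sup>2)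
      = (\<Sum>A\<in>Pow (E - {e}). (\<mu> A * b * (u (A - {e}) - u A)\<^sup>2 + \<mu> A * a * (u (insert e A) - u A)\<^sup>2)
          + (\<mu> (insert e A) * b * (u (insert e A - {e}) - u (insert e A))\<^sup>2
             + \<mu> (insert e A) * a * (u (insert e (insert e A)) - u (insert e A))\<^sup>2))"
    unfolding sum_Pow_remove[OF finite_E e] by simp
  also have "\<dots> = (\<Sum>A\<in>Pow (E - {e}). (\<mu> A * a + \<mu> (insert e A) * b) * (u (insert e A) - u A)\<^sup>2)"
  proof (rule sum.cong[OF refl])
    fix A assume "A \<in> Pow (E - {e})"
    then have "A - {e} = A" "insert e A - {e} = A" by auto
    then show "\<mu> A * b * (u (A - {e}) - u A)\<^sup>2 + \<mu> A * a * (u (insert e A) - u A)\<^sup>2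
        + (\<mu> (insert e A) * b * (u (insert e A - {e}) - u (insert e A))\<^sup>2
           + \<mu> (insert e A) * a * (u (insert e (insert e A)) - u (insert e A))\<^sup>2)
      = (\<mu> A * a + \<mu> (insert e A) * b) * (u (insert e A) - u A)\<^sup>2"
      by (simp add: power2_commute[of "u A"] distrib_right)
  qed
  finally show ?thesis .
qed

text \<open>Each single-edge flip weight is controlled by \<open>\<mu> (insert e A)\<close> because adding or removing
  one edge changes \<open>\<mu>\<close> by a bounded factor, and \<open>a \<le> p Z\<close>.\<close>

lemma flip_weight_le:
  assumes A: "A \<subseteq> E - {e}" and e: "e \<in> E"
  defines "a \<equiv> \<Sum>H\<in>Pow (E - {e}). \<mu> (insert e H)" and "b \<equiv> \<Sum>H\<in>Pow (E - {e}). \<mu> H"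
  shows "\<mu> A * a + \<mu> (insert e A) * b \<le> 2 * real q * Z * ((1 - p) * \<mu> (insert e A))"
proof -
  define c where "c = real q * (1 - p) / p"
  have c: "0 \<le> c" unfolding c_def using p_pos p_less_1 by simp
  have b_le: "b \<le> c * a"
    unfolding a_def b_def c_def sum_distrib_left by (rule sum_mono) (rule \<mu>_le_insert[OF _ e], simp)
  have "a \<le> p / (1 - p) * b"
    unfolding a_def b_def sum_distrib_left by (rule sum_mono) (rule \<mu>_insert_le[OF _ e], simp)
  then have "(1 - p) * a \<le> p * b" using p_less_1 by (simp add: field_simps)
  then have "a \<le> p * (a + b)" by (simp add: algebra_simps)
  moreover have "a + b = Z"
    unfolding a_def b_def Z_def using sum_Pow_remove[OF finite_E e, of \<mu>] by (simp add: sum.distrib)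
  ultimately have a_le: "a \<le> p * Z" by simp
  have a: "0 \<le> a" unfolding a_def using \<mu>_pos by (intro sum_nonneg) (simp add: less_imp_le)
  have \<mu>e: "0 \<le> \<mu> (insert e A)" using \<mu>_pos by (simp add: less_imp_le)
  have "\<mu> A * a + \<mu> (insert e A) * b \<le> c * \<mu> (insert e A) * a + \<mu> (insert e A) * (c * a)"
    using \<mu>_le_insert[OF A e] b_le a \<mu>e unfolding c_def by (intro add_mono mult_right_mono mult_left_mono) auto
  also have "\<dots> = 2 * c * \<mu> (insert e A) * a" by (simp add: algebra_simps)
  also have "\<dots> \<le> 2 * c * \<mu> (insert e A) * (p * Z)"
    using a_le c \<mu>e by (intro mult_left_mono) auto
  also have "\<dots> = 2 * real q * Z * ((1 - p) * \<mu> (insert e A))"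
    unfolding c_def using p_pos by (simp add: field_simps)
  finally show ?thesis .
qed

lemma single_edge_flip_le:
  assumes e: "e \<in> E"
  shows "(\<Sum>S\<in>Pow E. \<Sum>T\<in>Pow E. \<mu> S * \<mu> T * (u (splice {e} S T) - u S)\<^sup>2) \<le> 2 * real q * Z * edge_energy u e"
proof -
  let ?a = "\<Sum>H\<in>Pow (E - {e}). \<mu> (insert e H)" and ?b = "\<Sum>H\<in>Pow (E - {e}). \<mu> H"
  have "(\<Sum>A\<in>Pow (E - {e}). (\<mu> A * ?a + \<mu> (insert e A) * ?b) * (u (insert e A) - u A)\<^sup>2)
      \<le> (\<Sum>A\<in>Pow (E - {e}). 2 * real q * Z * ((1 - p) * \<mu> (insert e A)) * (u (insert e A) - u A)\<^sup>2)"
    using flip_weight_le[OF _ e] by (intro sum_mono mult_right_mono) auto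
  then show ?thesis
    unfolding single_edge_flip_eq[OF e] edge_energy_def by (simp add: sum_distrib_left mult.assoc)
qed

lemma canonical_path_step_le:
  assumes es: "distinct es" "set es = E" and width: "ordering_width ends es \<le> l" and i: "i < length es"
  shows "(\<Sum>A\<in>Pow E. \<Sum>B\<in>Pow E. \<mu> A * \<mu> B *
            (u (splice (set (take (Suc i) es)) A B) - u (splice (set (take i es)) A B))\<^sup>2)
    \<le> 2 * real q ^ (l + 1) * Z * edge_energy u (es ! i)"
proof -
  define X where "X = set (take i es)"
  have X_Suc: "set (take (Suc i) es) = insert (es ! i) X"
    using i unfolding X_def by (simp add: take_Suc_conv_app_nth)
  have e: "es ! i \<in> E" using i es(2) nth_mem by blast
  have e_X: "es ! i \<notin> X"
  proof
    assume "es ! i \<in> X"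
    then obtain j where "j < i" "es ! j = es ! i"
      unfolding X_def by (auto simp: in_set_conv_nth)
    then show False using i nth_eq_iff_index_eq[OF es(1)] by fastforce
  qed
  have X_E: "X \<subseteq> E" unfolding X_def using set_take_subset[of i es] es(2) by simp
  have "set es = X \<union> set (drop i es)" "X \<inter> set (drop i es) = {}"
    unfolding X_def using set_append[of "take i es" "drop i es"] es(1) distinct_append[of "take i es" "drop i es"]
    by simp_all
  then have "E - X = set (drop i es)" using es(2) by auto
  then have width_X: "card ((\<Union>e\<in>X. ends e) \<inter> (\<Union>e\<in>E - X. ends e)) \<le> l"
    using ordering_width_ge[of i es ends] i width unfolding X_def by simp
  have "(\<Sum>A\<in>Pow E. \<Sum>B\<in>Pow E. \<mu> A * \<mu> B * (u (splice (insert (es ! i) X) A B) - u (splice X A B))\<^sup>2)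
      \<le> real q ^ l * (\<Sum>S\<in>Pow E. \<Sum>T\<in>Pow E. \<mu> S * \<mu> T * (u (splice {es ! i} S T) - u S)\<^sup>2)"
    by (rule splice_insert_step_le[OF X_E e_X width_X])
  also have "\<dots> \<le> real q ^ l * (2 * real q * Z * edge_energy u (es ! i))"
    by (intro mult_left_mono single_edge_flip_le[OF e]) simp
  finally show ?thesis unfolding X_Suc X_def[symmetric] by (simp add: algebra_simps)
qed

lemma variance_le_edge_energy:
  assumes es: "distinct es" "set es = E" and width: "ordering_width ends es \<le> l"
    and mean: "(\<Sum>A\<in>Pow E. \<mu> A * u A) = 0"
  shows "sq_norm u \<le> real (card E) * real q ^ (l + 1) * (\<Sum>e\<in>E. edge_energy u e)"
proof -
  define m where "m = length es"
  define path where "path A B i = splice (set (take i es)) A B" for A B i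
  have m: "card E = m" unfolding m_def using distinct_card[OF es(1)] es(2) by simp
  have path: "(u B - u A)\<^sup>2 \<le> real m * (\<Sum>i<m. (u (path A B (Suc i)) - u (path A B i))\<^sup>2)"
    if "A \<in> Pow E" "B \<in> Pow E" for A B
  proof -
    have "path A B 0 = A" "path A B m = B"
      using that es(2) unfolding path_def m_def splice_def by auto
    then show ?thesis using telescope_sq_le[of "\<lambda>i. u (path A B i)" m] by simp
  qed
  have "2 * Z * sq_norm u = (\<Sum>A\<in>Pow E. \<Sum>B\<in>Pow E. \<mu> A * \<mu> B * (u B - u A)\<^sup>2)"
    using pairwise_variance[of u] mean unfolding Z_def by simp
  also have "\<dots> \<le> (\<Sum>A\<in>Pow E. \<Sum>B\<in>Pow E. \<mu> A * \<mu> B * (real m * (\<Sum>i<m. (u (path A B (Suc i)) - u (path A B i))\<^sup>2)))"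
    using path \<mu>_pos by (intro sum_mono mult_left_mono) (auto intro: less_imp_le)
  also have "\<dots> = real m * (\<Sum>i<m. \<Sum>A\<in>Pow E. \<Sum>B\<in>Pow E. \<mu> A * \<mu> B * (u (path A B (Suc i)) - u (path A B i))\<^sup>2)"
  proof -
    have "(\<Sum>A\<in>Pow E. \<Sum>B\<in>Pow E. \<mu> A * \<mu> B * (real m * (\<Sum>i<m. (u (path A B (Suc i)) - u (path A B i))\<^sup>2)))
        = real m * (\<Sum>A\<in>Pow E. \<Sum>B\<in>Pow E. \<Sum>i<m. \<mu> A * \<mu> B * (u (path A B (Suc i)) - u (path A B i))\<^sup>2)"
      by (simp add: sum_distrib_left algebra_simps)
    then show ?thesis by (simp add: sum.swap[of _ "{..<m}"])
  qed
  also have "\<dots> \<le> real m * (\<Sum>i<m. 2 * real q ^ (l + 1) * Z * edge_energy u (es ! i))"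
    unfolding path_def m_def using canonical_path_step_le[OF es width]
    by (intro mult_left_mono sum_mono) auto
  also have "\<dots> = 2 * Z * (real m * real q ^ (l + 1) * (\<Sum>e\<in>E. edge_energy u e))"
    using sum.reindex_bij_betw[OF bij_betw_nth[OF es(1) _ es(2)[symmetric]], where g = "edge_energy u"]
    unfolding m_def by (simp add: sum_distrib_left[symmetric] mult_ac)
  finally show ?thesis using Z_pos m by simp
qed

lemma poincare:
  assumes "distinct es" "set es = E" "ordering_width ends es \<le> l" "(\<Sum>A\<in>Pow E. \<mu> A * u A) = 0"
  shows "sq_norm u \<le> real (card E) ^ 2 * real q ^ (l + 1) * (sq_norm u - quad_form u)"
proof -
  have "sq_norm u \<le> real (card E) * real q ^ (l + 1) * (\<Sum>e\<in>E. edge_energy u e)"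
    by (rule variance_le_edge_energy[OF assms])
  also have "\<dots> \<le> real (card E) * real q ^ (l + 1) * (real (card E) * (sq_norm u - quad_form u))"
    by (intro mult_left_mono sum_edge_energy_le) auto
  finally show ?thesis by (simp add: power2_eq_square mult_ac)
qed

lemma spectral_gap_ge_ordering:
  assumes es: "distinct es" "set es = E" "ordering_width ends es \<le> l"
  shows "1 / (real (card E) ^ 2 * real q ^ (l + 1)) \<le> spectral_gap (Pow E) P"
proof -
  define K where "K = real (card E) ^ 2 * real q ^ (l + 1)"
  have K: "K = 0 \<or> 1 \<le> K"
  proof (cases "card E = 0")
    case False
    then have "1 \<le> real (card E) ^ 2" by simp
    moreover have "1 \<le> real q ^ (l + 1)" by (rule one_le_power) (use q_pos in simp)
    ultimately have "1 * 1 \<le> K" unfolding K_def by (intro mult_mono) auto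
    then show ?thesis by simp
  qed (simp add: K_def)
  have quad_form_le: "quad_form u \<le> (1 - 1 / K) * sq_norm u" if "(\<Sum>A\<in>Pow E. \<mu> A * u A) = 0" for u
    using K
  proof
    assume "1 \<le> K"
    then show ?thesis
      using poincare[OF es that] unfolding K_def[symmetric] by (simp add: field_simps)
  qed (use sq_norm_minus_quad_form_nonneg[of u] in simp)
  have "1 - (1 - 1 / K) \<le> spectral_gap (Pow E) P"
    using K eigenvalue_norm_le[OF quad_form_nonneg quad_form_le]
    by (intro spectral_gap_ge) (auto simp: field_simps)
  then show ?thesis unfolding K_def by simp
qed

end

theorem corollary4p11:
  fixes V :: "'v set" and E :: "'e set" and ends :: "'e \<Rightarrow> 'v set"
    and l :: nat and p :: real and q :: nat
  assumes "finite_graph V E ends"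
    and "linear_width E ends \<le> l"
    and "0 < p" and "p < 1"
    and "1 \<le> q"
  shows "spectral_gap (Pow E) (SW_RC V E ends p q)
           \<ge> 1 / (2 * real q ^ (l + 1)) * (1 / real (card E) ^ 2)"
proof -
  interpret swendsen_wang_rc V E ends p q
    using assms by unfold_locales
  obtain es where es: "distinct es" "set es = E" "ordering_width ends es \<le> linear_width E ends"
    using linear_width_ordering[OF finite_E] .
  have gap: "1 / (real (card E) ^ 2 * real q ^ (l + 1)) \<le> spectral_gap (Pow E) (SW_RC V E ends p q)"
    using spectral_gap_ge_ordering[OF es(1,2) order_trans[OF es(3) assms(2)]] .
  have "1 / (2 * real q ^ (l + 1)) * (1 / real (card E) ^ 2) = 1 / 2 * (1 / (real (card E) ^ 2 * real q ^ (l + 1)))"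
    by (simp add: field_simps)
  moreover have "0 \<le> 1 / (real (card E) ^ 2 * real q ^ (l + 1))"
    by simp
  ultimately show ?thesis using gap by linarith
qed

end
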